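(* For every integer $d\geq 5$, the curve $C: f=xyz(x^{d-3}+y^{d-3}+z^{d-3})=0$ in $\mathbb{P}^2$ is of type $(d,d-2,3)$, satisfies $\Delta m:=(2r-d+3)-m=d-4$ (with $r=d-2$, $m=3$), and has total Tjurina number $\tau(C)=3(d-2)$.
   Context: Let $S=\mathbb{C}[x,y,z]$. For a reduced homogeneous $f\in S$ of degree $d$, let $D_0(f)=\{(a,b,c)\in S^3: af_x+bf_y+cf_z=0\}$ be the graded $S$-module of Jacobian syzygies. The curve $C:f=0$ is of type $(d,r,m)$ if $D_0(f)$ is minimally generated by $m$ homogeneous elements, all of degree $r$. The total Tjurina number $\tau(C)$ is the degree of the Jacobian ideal $(f_x,f_y,f_z)$, i.e. the sum of the Tjurina numbers of the singular points of $C$. *)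

theory Defs
  imports Complex_Main "HOL-Library.Poly_Mapping" "HOL-Library.Product_Plus"
begin

text \<open>The polynomial ring S = C[x,y,z]: finitely supported maps from exponent
triples (i,j,k) (standing for the monomial x^i y^j z^k) to complex coefficients,
with the convolution product of HOL-Library.Poly_Mapping.\<close>

type_synonym mono3 = "nat \<times> nat \<times> nat"
type_synonym mpoly3 = "mono3 \<Rightarrow>\<^sub>0 complex"

definition mono_deg :: "mono3 \<Rightarrow> nat" where
  "mono_deg m = fst m + fst (snd m) + snd (snd m)"

definition const3 :: "complex \<Rightarrow> mpoly3" where
  "const3 c = Poly_Mapping.single (0,0,0) c"

definition varX :: mpoly3 where "varX = Poly_Mapping.single (1,0,0) 1"
definition varY :: mpoly3 where "varY = Poly_Mapping.single (0,1,0) 1"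
definition varZ :: mpoly3 where "varZ = Poly_Mapping.single (0,0,1) 1"

text \<open>Homogeneous of degree k (the zero polynomial is homogeneous of every degree).\<close>
definition homogeneous :: "nat \<Rightarrow> mpoly3 \<Rightarrow> bool" where
  "homogeneous k p \<longleftrightarrow> (\<forall>m\<in>Poly_Mapping.keys p. mono_deg m = k)"

definition pdX :: "mpoly3 \<Rightarrow> mpoly3" where
  "pdX p = (\<Sum>m\<in>Poly_Mapping.keys p. case m of (i,j,k) \<Rightarrow>
      Poly_Mapping.single (i - 1, j, k) (of_nat i * Poly_Mapping.lookup p m))"
definition pdY :: "mpoly3 \<Rightarrow> mpoly3" where
  "pdY p = (\<Sum>m\<in>Poly_Mapping.keys p. case m of (i,j,k) \<Rightarrow>
      Poly_Mapping.single (i, j - 1, k) (of_nat j * Poly_Mapping.lookup p m))"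
definition pdZ :: "mpoly3 \<Rightarrow> mpoly3" where
  "pdZ p = (\<Sum>m\<in>Poly_Mapping.keys p. case m of (i,j,k) \<Rightarrow>
      Poly_Mapping.single (i, j, k - 1) (of_nat k * Poly_Mapping.lookup p m))"

definition reduced3 :: "mpoly3 \<Rightarrow> bool" where
  "reduced3 f \<longleftrightarrow> f \<noteq> 0 \<and> (\<forall>g. g * g dvd f \<longrightarrow> Poly_Mapping.keys g \<subseteq> {(0,0,0)})"

definition D0 :: "mpoly3 \<Rightarrow> (mpoly3 \<times> mpoly3 \<times> mpoly3) set" where
  "D0 f = {(a,b,c). a * pdX f + b * pdY f + c * pdZ f = 0}"

definition smult3 :: "mpoly3 \<Rightarrow> mpoly3 \<times> mpoly3 \<times> mpoly3 \<Rightarrow> mpoly3 \<times> mpoly3 \<times> mpoly3" where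
  "smult3 s v = (case v of (a,b,c) \<Rightarrow> (s*a, s*b, s*c))"

definition gen_module3 :: "(mpoly3 \<times> mpoly3 \<times> mpoly3) list \<Rightarrow> (mpoly3 \<times> mpoly3 \<times> mpoly3) set" where
  "gen_module3 G = {(\<Sum>i<length G. smult3 (s i) (G ! i)) | s. True}"

definition homogeneous3 :: "nat \<Rightarrow> mpoly3 \<times> mpoly3 \<times> mpoly3 \<Rightarrow> bool" where
  "homogeneous3 r v \<longleftrightarrow> (case v of (a,b,c) \<Rightarrow> homogeneous r a \<and> homogeneous r b \<and> homogeneous r c)"

definition curve_type :: "mpoly3 \<Rightarrow> nat \<Rightarrow> nat \<Rightarrow> nat \<Rightarrow> bool" where
  "curve_type f d r m \<longleftrightarrow> homogeneous d f \<and> reduced3 f \<and>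
     (\<exists>G. length G = m \<and> (\<forall>g\<in>set G. homogeneous3 r g \<and> g \<noteq> 0) \<and> gen_module3 G = D0 f) \<and>
     (\<forall>G. gen_module3 G = D0 f \<longrightarrow> m \<le> length G)"

text \<open>Jacobian ideal and its degree (the eventual value of the Hilbert function of S/J).\<close>
definition jacobian_ideal :: "mpoly3 \<Rightarrow> mpoly3 set" where
  "jacobian_ideal f = {a * pdX f + b * pdY f + c * pdZ f | a b c. True}"

definition cscale :: "complex \<Rightarrow> mpoly3 \<Rightarrow> mpoly3" where
  "cscale c p = const3 c * p"

definition S_deg :: "nat \<Rightarrow> mpoly3 set" where
  "S_deg k = {p. homogeneous k p}"

definition hilbert_quot :: "mpoly3 set \<Rightarrow> nat \<Rightarrow> nat" where
  "hilbert_quot J k = vector_space.dim cscale (S_deg k) - vector_space.dim cscale (J \<inter> S_deg k)"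

definition total_tjurina :: "mpoly3 \<Rightarrow> nat" where
  "total_tjurina f = (THE t. \<forall>\<^sub>F k in sequentially. hilbert_quot (jacobian_ideal f) k = t)"

definition fermat_xyz :: "nat \<Rightarrow> mpoly3" where
  "fermat_xyz d = varX * varY * varZ * (varX ^ (d - 3) + varY ^ (d - 3) + varZ ^ (d - 3))"

end

(*
  Write n = d - 2, f = xyz (x^(n-1) + y^(n-1) + z^(n-1)) and X, Y, Z for x^(n-1), y^(n-1), z^(n-1).
  Then f_x = yz A, f_y = xz B, f_z = xy C with A = nX + Y + Z, B = X + nY + Z, C = X + Y + nZ.
  Setting x = 0 in a Jacobian syzygy a f_x + b f_y + c f_z = 0 shows x | a, and likewise y | b and
  z | c, so D_0(f) is the module of syzygies (a', b', c') of (A, B, C), multiplied by (x, y, z).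
  As A = (n - 1) X + (X + Y + Z) etc., the invertible substitution
  a' |-> (n - 1) a' + (a' + b' + c') turns these into the syzygies of the pure powers X, Y, Z,
  which are generated by the Koszul relations; transported back they give three generators of
  degree n. Two elements never suffice: all terms of a syzygy have degree >= n, so the
  coefficients of three fixed monomials of degree n depend linearly on the constant terms of the
  coefficients of a combination, and on the three generators they form a nonsingular matrix.
  A square factor g^2 of f divides (n + 1) x f_x - y f_y - z f_z = (n^2 + n - 2) x^n y z, so g is
  a term, and then g^2 | f forces g to be constant.
  For the Tjurina number, rank-nullity shows that the Jacobian ideal has dimension
  3 dim S_j - dim D_0(f)_j in degree j + n + 1, while the same substitution identifies
  D_0(f)_(i+1) with the kernel of (a, b, c) |-> aX + bY + cZ on S_i^3, which is onto S_(i+n-1)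
  for large i. Hence the Hilbert function of S/J is eventually 3n = 3(d - 2).
*)
theory Submission
  imports Defs "HOL-Library.Product_Lexorder"
begin

(* The lexicographic order on exponents is compatible with addition. This provides leading and
   trailing terms below, and makes Poly_Mapping's instances give \<complex>[x,y,z] no zero divisors. *)
instance prod :: (ordered_cancel_comm_monoid_add, ordered_cancel_comm_monoid_add)
  ordered_cancel_comm_monoid_add
proof
  fix a b c :: "'a \<times> 'b"
  assume "a \<le> b"
  then show "c + a \<le> c + b"
    by (cases a; cases b; cases c) (auto simp: add_strict_left_mono add_left_mono)
qed

lemma poly_mapping_sum_single:
  "(\<Sum>a\<in>Poly_Mapping.keys p. Poly_Mapping.single a (Poly_Mapping.lookup p a)) = p"
  by (rule poly_mapping_eqI) (simp add: lookup_sum lookup_single when_def in_keys_iff)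

lemma poly_mapping_induct [case_names zero single add]:
  fixes P :: "('a \<Rightarrow>\<^sub>0 'b::comm_monoid_add) \<Rightarrow> bool"
  assumes "P 0" "\<And>a c. P (Poly_Mapping.single a c)" "\<And>p q. P p \<Longrightarrow> P q \<Longrightarrow> P (p + q)"
  shows "P p"
proof -
  have "P (\<Sum>a\<in>A. Poly_Mapping.single a (Poly_Mapping.lookup p a))" if "finite A" for A
    using that by (induction A rule: finite_induct) (auto intro: assms)
  from this[of "Poly_Mapping.keys p"] show ?thesis by (simp only: finite_keys poly_mapping_sum_single)
qed

lemma keys_single_mult:
  "Poly_Mapping.keys (Poly_Mapping.single e c * p) \<subseteq> (\<lambda>k. e + k) ` Poly_Mapping.keys p"
  using keys_mult[of "Poly_Mapping.single e c" p] by (auto split: if_splits)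

lemma lookup_single_mult_add:
  fixes p :: "'a::{comm_monoid_add, cancel_ab_semigroup_add} \<Rightarrow>\<^sub>0 'b::semiring_0"
  shows "Poly_Mapping.lookup (Poly_Mapping.single e c * p) (e + m) = c * Poly_Mapping.lookup p m"
proof (induction p rule: poly_mapping_induct)
  case (single a d) then show ?case by (simp add: mult_single lookup_single when_def)
qed (simp_all add: distrib_left lookup_add)

lemma lookup_mult_unique_decomposition:
  fixes g h :: "'a::{comm_monoid_add, cancel_ab_semigroup_add} \<Rightarrow>\<^sub>0 'b::ring"
  assumes unique: "\<And>u v. u \<in> Poly_Mapping.keys g \<Longrightarrow> v \<in> Poly_Mapping.keys h \<Longrightarrow> u + v = a + b \<Longrightarrow> u = a"
  shows "Poly_Mapping.lookup (g * h) (a + b) = Poly_Mapping.lookup g a * Poly_Mapping.lookup h b"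
proof -
  define g' where "g' = g - Poly_Mapping.single a (Poly_Mapping.lookup g a)"
  have g': "k \<in> Poly_Mapping.keys g \<and> k \<noteq> a" if "k \<in> Poly_Mapping.keys g'" for k
    using that by (cases "k = a") (simp_all add: g'_def in_keys_iff lookup_minus lookup_single_not_eq)
  have "a + b \<notin> Poly_Mapping.keys (g' * h)"
  proof
    assume "a + b \<in> Poly_Mapping.keys (g' * h)"
    then obtain u v where "u \<in> Poly_Mapping.keys g'" "v \<in> Poly_Mapping.keys h" "u + v = a + b"
      using keys_mult[of g' h] by auto
    then show False using g' unique by blast
  qed
  moreover have "g * h = Poly_Mapping.single a (Poly_Mapping.lookup g a) * h + g' * h"
    by (simp add: g'_def flip: distrib_right)
  ultimately show ?thesis
    by (simp add: in_keys_iff lookup_add lookup_single_mult_add)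
qed

lemma lookup_mult_Max_keys:
  fixes g h :: "'a::{linorder, ordered_cancel_comm_monoid_add} \<Rightarrow>\<^sub>0 'b::ring"
  assumes "g \<noteq> 0" "h \<noteq> 0"
  shows "Poly_Mapping.lookup (g * h) (Max (Poly_Mapping.keys g) + Max (Poly_Mapping.keys h))
       = Poly_Mapping.lookup g (Max (Poly_Mapping.keys g)) * Poly_Mapping.lookup h (Max (Poly_Mapping.keys h))"
proof (rule lookup_mult_unique_decomposition)
  fix u v assume "u \<in> Poly_Mapping.keys g" "v \<in> Poly_Mapping.keys h"
    and sum: "u + v = Max (Poly_Mapping.keys g) + Max (Poly_Mapping.keys h)"
  then have "u \<le> Max (Poly_Mapping.keys g)" "v \<le> Max (Poly_Mapping.keys h)" by simp_all
  with sum show "u = Max (Poly_Mapping.keys g)"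
    by (metis add_less_le_mono order_less_le)
qed

lemma lookup_mult_Min_keys:
  fixes g h :: "'a::{linorder, ordered_cancel_comm_monoid_add} \<Rightarrow>\<^sub>0 'b::ring"
  assumes "g \<noteq> 0" "h \<noteq> 0"
  shows "Poly_Mapping.lookup (g * h) (Min (Poly_Mapping.keys g) + Min (Poly_Mapping.keys h))
       = Poly_Mapping.lookup g (Min (Poly_Mapping.keys g)) * Poly_Mapping.lookup h (Min (Poly_Mapping.keys h))"
proof (rule lookup_mult_unique_decomposition)
  fix u v assume "u \<in> Poly_Mapping.keys g" "v \<in> Poly_Mapping.keys h"
    and sum: "u + v = Min (Poly_Mapping.keys g) + Min (Poly_Mapping.keys h)"
  then have "Min (Poly_Mapping.keys g) \<le> u" "Min (Poly_Mapping.keys h) \<le> v" by simp_all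
  with sum show "u = Min (Poly_Mapping.keys g)"
    by (metis add_less_le_mono order_less_le)
qed

lemma dvd_single_imp_single:
  fixes g :: "'a::{linorder, ordered_cancel_comm_monoid_add} \<Rightarrow>\<^sub>0 'b::idom"
  assumes "g dvd Poly_Mapping.single m c" "c \<noteq> 0"
  shows "\<exists>e c'. g = Poly_Mapping.single e c'"
proof -
  obtain h where gh: "Poly_Mapping.single m c = g * h" using assms(1) by (rule dvdE)
  moreover have "Poly_Mapping.single m c \<noteq> 0"
    using assms(2) by (metis lookup_single_eq lookup_zero)
  ultimately have nz: "g \<noteq> 0" "h \<noteq> 0" by auto
  let ?Mg = "Max (Poly_Mapping.keys g)" and ?Mh = "Max (Poly_Mapping.keys h)"
  let ?mg = "Min (Poly_Mapping.keys g)" and ?mh = "Min (Poly_Mapping.keys h)"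
  have ne: "Poly_Mapping.keys g \<noteq> {}" "Poly_Mapping.keys h \<noteq> {}" using nz by auto
  have "?Mg \<in> Poly_Mapping.keys g" "?Mh \<in> Poly_Mapping.keys h"
    "?mg \<in> Poly_Mapping.keys g" "?mh \<in> Poly_Mapping.keys h"
    using ne by simp_all
  then have "?Mg + ?Mh \<in> Poly_Mapping.keys (g * h)" "?mg + ?mh \<in> Poly_Mapping.keys (g * h)"
    using lookup_mult_Max_keys[OF nz] lookup_mult_Min_keys[OF nz] by (simp_all add: in_keys_iff)
  then have "?Mg + ?Mh = ?mg + ?mh"
    using assms(2) by (simp flip: gh)
  moreover have "?mg \<le> ?Mg" "?mh \<le> ?Mh" using ne by simp_all
  ultimately have "?mg = ?Mg"
    by (metis add_less_le_mono order_less_le)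
  then have "Poly_Mapping.keys g = {?Mg}"
    using ne Min_le[of "Poly_Mapping.keys g"] Max_ge[of "Poly_Mapping.keys g"] by (force intro: antisym)
  then obtain e where "Poly_Mapping.keys g = {e}" by blast
  then have "g = Poly_Mapping.single e (Poly_Mapping.lookup g e)"
    using poly_mapping_sum_single[of g] by simp
  then show ?thesis by blast
qed

definition restrict_keys :: "('a \<Rightarrow> bool) \<Rightarrow> ('a \<Rightarrow>\<^sub>0 'b::zero) \<Rightarrow> 'a \<Rightarrow>\<^sub>0 'b" where
  "restrict_keys P p = Poly_Mapping.mapp (\<lambda>m c. if P m then c else 0) p"

lemma lookup_restrict_keys:
  "Poly_Mapping.lookup (restrict_keys P p) m = (if P m then Poly_Mapping.lookup p m else 0)"
  by (auto simp: restrict_keys_def lookup_mapp when_def in_keys_iff split: if_splits)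

lemma keys_restrict_keys:
  "Poly_Mapping.keys (restrict_keys P p) = {m \<in> Poly_Mapping.keys p. P m}"
  by (auto simp: in_keys_iff lookup_restrict_keys split: if_splits)

lemma restrict_keys_add:
  "restrict_keys P (p + q) = restrict_keys P p + restrict_keys P q"
  by (rule poly_mapping_eqI) (simp add: lookup_restrict_keys lookup_add)

lemma restrict_keys_zero [simp]: "restrict_keys P 0 = 0"
  by (rule poly_mapping_eqI) (simp add: lookup_restrict_keys)

lemma restrict_keys_single:
  "restrict_keys P (Poly_Mapping.single m c) = (if P m then Poly_Mapping.single m c else 0)"
  by (rule poly_mapping_eqI) (simp add: lookup_restrict_keys lookup_single when_def)

lemma restrict_keys_split:
  "restrict_keys P p + restrict_keys (\<lambda>m. \<not> P m) p = (p :: 'a \<Rightarrow>\<^sub>0 'b::monoid_add)"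
  by (rule poly_mapping_eqI) (simp add: lookup_restrict_keys lookup_add)

lemma restrict_keys_id:
  "(\<And>m. m \<in> Poly_Mapping.keys p \<Longrightarrow> P m) \<Longrightarrow> restrict_keys P p = p"
  by (rule poly_mapping_eqI) (auto simp: lookup_restrict_keys in_keys_iff)

lemma restrict_keys_eq_zero_iff:
  "restrict_keys P p = 0 \<longleftrightarrow> (\<forall>m \<in> Poly_Mapping.keys p. \<not> P m)"
  by (metis (mono_tags, lifting) empty_iff keys_eq_empty keys_restrict_keys mem_Collect_eq subsetI subset_empty)

lemma restrict_keys_mult:
  fixes p q :: "'a::comm_monoid_add \<Rightarrow>\<^sub>0 'b::semiring_0"
  assumes "\<And>m m'. P (m + m') \<longleftrightarrow> P m \<and> P m'"
  shows "restrict_keys P (p * q) = restrict_keys P p * restrict_keys P q"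
proof (induction p arbitrary: q rule: poly_mapping_induct)
  case (single a c)
  show ?case
  proof (induction q rule: poly_mapping_induct)
    case (single b e) then show ?case by (simp add: mult_single restrict_keys_single assms)
  qed (simp_all add: distrib_left restrict_keys_add)
qed (simp_all add: distrib_right restrict_keys_add)

lemma single_one_dvdI:
  fixes p :: "'a::cancel_comm_monoid_add \<Rightarrow>\<^sub>0 'b::comm_semiring_1"
  assumes "\<And>m. m \<in> Poly_Mapping.keys p \<Longrightarrow> \<exists>k. m = e + k"
  shows "Poly_Mapping.single e 1 dvd p"
proof
  define q where "q = (\<Sum>m\<in>Poly_Mapping.keys p. Poly_Mapping.single (m - e) (Poly_Mapping.lookup p m))"
  have "Poly_Mapping.single e 1 * q
      = (\<Sum>m\<in>Poly_Mapping.keys p. Poly_Mapping.single (e + (m - e)) (Poly_Mapping.lookup p m))"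
    by (simp add: q_def sum_distrib_left mult_single)
  also have "\<dots> = (\<Sum>m\<in>Poly_Mapping.keys p. Poly_Mapping.single m (Poly_Mapping.lookup p m))"
    using assms by (intro sum.cong refl) (metis add_diff_cancel_left')
  finally show "p = Poly_Mapping.single e 1 * q"
    by (simp add: poly_mapping_sum_single)
qed

lemma keys_if_single_dvd:
  assumes "Poly_Mapping.single e c dvd p" "m \<in> Poly_Mapping.keys p"
  shows "\<exists>k. m = e + k"
proof -
  obtain q where "p = Poly_Mapping.single e c * q" using assms(1) ..
  then show ?thesis using assms(2) keys_single_mult by blast
qed

locale coordinate_derivation =
  fixes w :: "'a::comm_monoid_add \<Rightarrow> nat" and \<delta> :: "'a \<Rightarrow> 'a"
  assumes weight_add: "w (a + b) = w a + w b"
    and shift_add: "w a \<noteq> 0 \<Longrightarrow> \<delta> (a + b) = \<delta> a + b"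
begin

definition deriv :: "('a \<Rightarrow>\<^sub>0 'b::comm_semiring_1) \<Rightarrow> 'a \<Rightarrow>\<^sub>0 'b" where
  "deriv p = (\<Sum>m\<in>Poly_Mapping.keys p.
     Poly_Mapping.single (\<delta> m) (of_nat (w m) * Poly_Mapping.lookup p m))"

lemma deriv_superset:
  assumes "finite K" "Poly_Mapping.keys p \<subseteq> K"
  shows "deriv p = (\<Sum>m\<in>K. Poly_Mapping.single (\<delta> m) (of_nat (w m) * Poly_Mapping.lookup p m))"
  unfolding deriv_def by (rule sum.mono_neutral_left[OF assms]) (auto simp: in_keys_iff)

lemma deriv_zero [simp]: "deriv 0 = 0"
  by (simp add: deriv_def)

lemma deriv_single: "deriv (Poly_Mapping.single a c) = Poly_Mapping.single (\<delta> a) (of_nat (w a) * c)"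
  by (subst deriv_superset[of "{a}"]) auto

lemma deriv_add: "deriv (p + q) = deriv p + deriv q"
proof -
  let ?K = "Poly_Mapping.keys p \<union> Poly_Mapping.keys q"
  have "Poly_Mapping.keys (p + q) \<subseteq> ?K" by (rule keys_add)
  then show ?thesis
    by (simp add: deriv_superset[of ?K] lookup_add distrib_left single_add sum.distrib)
qed

lemma deriv_mult_single:
  "deriv (Poly_Mapping.single a c * Poly_Mapping.single b e) =
     deriv (Poly_Mapping.single a c) * Poly_Mapping.single b e
     + Poly_Mapping.single a c * deriv (Poly_Mapping.single b e)"
proof -
  have "\<delta> (a + b) = a + \<delta> b" if "w b \<noteq> 0"
    using shift_add[OF that, of a] by (simp add: add.commute)
  then show ?thesis
    using shift_add[of a b]
    by (cases "w a = 0"; cases "w b = 0")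
      (auto simp: deriv_single mult_single weight_add algebra_simps simp flip: single_add)
qed

lemma deriv_mult: "deriv (p * q) = deriv p * q + p * deriv q"
proof (induction p arbitrary: q rule: poly_mapping_induct)
  case (single a c)
  show ?case
  proof (induction q rule: poly_mapping_induct)
    case (single b e) then show ?case by (rule deriv_mult_single)
  qed (simp_all add: distrib_left deriv_add algebra_simps)
qed (simp_all add: distrib_right deriv_add algebra_simps)

end

section \<open>Linear algebra\<close>

context vector_space
begin

lemma span_inter_span_diff_eq_0:
  assumes E: "independent E" "finite E" and "C \<subseteq> E"
    and x: "x \<in> span C" "x \<in> span (E - C)"
  shows "x = 0"
proof -
  have fin: "finite C" "finite (E - C)" using E(2) \<open>C \<subseteq> E\<close> finite_subset by auto
  obtain u where u: "x = (\<Sum>c\<in>C. u c *s c)"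
    using x(1) span_finite[OF fin(1)] by auto
  obtain w where w: "x = (\<Sum>d\<in>E - C. w d *s d)"
    using x(2) span_finite[OF fin(2)] by auto
  define v where "v e = (if e \<in> C then u e else - w e)" for e
  have "(\<Sum>e\<in>C. v e *s e) = x"
    unfolding u v_def by simp
  moreover have "(\<Sum>e\<in>E - C. v e *s e) = - x"
    unfolding w v_def by (simp add: sum_negf)
  moreover have "(\<Sum>e\<in>E. v e *s e) = (\<Sum>e\<in>C. v e *s e) + (\<Sum>e\<in>E - C. v e *s e)"
    using E(2) \<open>C \<subseteq> E\<close> by (metis (no_types, lifting) sum.subset_diff add.commute)
  ultimately have "\<forall>e\<in>E. v e = 0"
    using independentD[OF E(1) E(2) order_refl] by simp
  then have "u c = 0" if "c \<in> C" for c
    using that \<open>C \<subseteq> E\<close> by (force simp: v_def)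
  then show ?thesis
    by (simp add: u)
qed

lemma independent_if_dual_functionals:
  assumes "finite A"
    and dual: "\<And>x. x \<in> A \<Longrightarrow> \<exists>\<phi>. (\<forall>u v. \<phi> (u + v) = \<phi> u + \<phi> v) \<and> (\<forall>c u. \<phi> (c *s u) = c * \<phi> u)
      \<and> (\<forall>y\<in>A. \<phi> y = (if y = x then 1 else 0))"
  shows "independent A"
proof (rule independent_if_scalars_zero[OF assms(1)])
  fix g x assume sum: "(\<Sum>y\<in>A. g y *s y) = 0" and x: "x \<in> A"
  obtain \<phi> where add: "\<And>u v. \<phi> (u + v) = \<phi> u + \<phi> v" and scale: "\<And>c u. \<phi> (c *s u) = c * \<phi> u"
    and delta: "\<And>y. y \<in> A \<Longrightarrow> \<phi> y = (if y = x then 1 else 0)"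
    using dual[OF x] by blast
  have "\<phi> 0 = 0"
    using scale[of 0 0] by simp
  have "\<phi> (\<Sum>y\<in>B. g y *s y) = (\<Sum>y\<in>B. g y * \<phi> y)" if "finite B" for B
    using that by (induction B rule: finite_induct) (simp_all add: add scale \<open>\<phi> 0 = 0\<close>)
  then have "0 = (\<Sum>y\<in>A. g y * \<phi> y)"
    using sum assms(1) \<open>\<phi> 0 = 0\<close> by metis
  also have "\<dots> = (\<Sum>y\<in>A. if y = x then g x else 0)"
    by (rule sum.cong) (simp_all add: delta)
  finally show "g x = 0"
    using x assms(1) by simp
qed

end

context vector_space_pair
begin

lemma dim_image_eq_of_inj_on_span:
  assumes lf: "Vector_Spaces.linear s1 s2 f" and inj: "inj_on f (vs1.span S)"
  shows "vs2.dim (f ` S) = vs1.dim S"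
proof -
  obtain B where B: "B \<subseteq> S" "vs1.independent B" "S \<subseteq> vs1.span B" "card B = vs1.dim S"
    using vs1.basis_exists[of S] by blast
  have span_B: "vs1.span B = vs1.span S"
    using B(1,3) by (simp add: vs1.span_eq vs1.span_superset subset_trans)
  have "vs2.independent (f ` B)"
    using linear_independent_injective_image[OF lf B(2)] inj span_B by simp
  moreover have "vs2.span (f ` B) = vs2.span (f ` S)"
    using linear_span_image[OF lf, of B] linear_span_image[OF lf, of S] span_B by simp
  moreover have "card (f ` B) = card B"
    using inj B(1) vs1.span_superset[of S] by (intro card_image) (blast intro: inj_on_subset)
  ultimately show ?thesis
    using vs2.dim_eq_card B(4) by metis
qed

lemma image_span_Un_kernel:
  assumes lf: "Vector_Spaces.linear s1 s2 f" and "\<And>c. c \<in> C \<Longrightarrow> f c = 0"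
  shows "f ` vs1.span (D \<union> C) = f ` vs1.span D"
proof
  interpret lf: Vector_Spaces.linear s1 s2 f by fact
  show "f ` vs1.span (D \<union> C) \<subseteq> f ` vs1.span D"
  proof
    fix y assume "y \<in> f ` vs1.span (D \<union> C)"
    then obtain a b where ab: "a \<in> vs1.span D" "b \<in> vs1.span C" "y = f (a + b)"
      by (auto simp: vs1.span_Un)
    moreover have "f b = 0"
      using lf.eq_0_on_span[OF assms(2) ab(2)] .
    ultimately show "y \<in> f ` vs1.span D"
      by (simp add: lf.add)
  qed
  show "f ` vs1.span D \<subseteq> f ` vs1.span (D \<union> C)"
    by (intro image_mono vs1.span_mono) simp
qed

lemma dim_image_add_dim_kernel:
  assumes lf: "Vector_Spaces.linear s1 s2 f" and "finite B"
  shows "vs2.dim (f ` vs1.span B) + vs1.dim {x \<in> vs1.span B. f x = 0} = vs1.dim (vs1.span B)"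
proof -
  interpret lf: Vector_Spaces.linear s1 s2 f by fact
  define U where "U = vs1.span B"
  define K where "K = {x \<in> U. f x = 0}"
  obtain C where C: "C \<subseteq> K" "vs1.independent C" "K \<subseteq> vs1.span C" "card C = vs1.dim K"
    using vs1.basis_exists by blast
  moreover have "C \<subseteq> U" using C(1) by (auto simp: K_def)
  ultimately obtain E where E: "C \<subseteq> E" "E \<subseteq> U" "vs1.independent E" "U \<subseteq> vs1.span E"
    by (metis vs1.maximal_independent_subset_extend)
  have "finite E"
    using vs1.independent_span_bound[OF \<open>finite B\<close> E(3)] E(2) by (simp add: U_def)
  define D where "D = E - C"
  have span_E: "vs1.span E = U"
    using E(2,4) vs1.span_minimal[OF E(2)] by (auto simp: U_def vs1.span_span)
  have "inj_on f (vs1.span D)"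
    unfolding lf.inj_on_iff_eq_0[OF vs1.subspace_span]
  proof (intro ballI impI)
    fix x assume "x \<in> vs1.span D" "f x = 0"
    moreover from this have "x \<in> K"
      using vs1.span_mono[of D E] span_E by (auto simp: K_def D_def)
    ultimately show "x = 0"
      using vs1.span_inter_span_diff_eq_0[OF E(3) \<open>finite E\<close> E(1)] C(3) by (auto simp: D_def)
  qed
  then have "vs2.dim (f ` vs1.span D) = vs1.dim (vs1.span D)"
    by (simp add: dim_image_eq_of_inj_on_span[OF lf] vs1.span_span)
  also have "\<dots> = card D"
    using vs1.independent_mono[OF E(3), of D] by (simp add: D_def vs1.dim_eq_card_independent)
  finally have "vs2.dim (f ` vs1.span D) = card D" .
  moreover have "f ` U = f ` vs1.span D"
    using image_span_Un_kernel[OF lf, of C D] C(1) E(1) span_E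
    by (auto simp: K_def D_def Un_absorb2 Diff_partition)
  moreover have "card E = card D + card C"
    using E(1) \<open>finite E\<close> by (simp add: D_def card_Diff_subset finite_subset card_mono)
  moreover have "vs1.dim U = card E"
    using vs1.basis_card_eq_dim[OF E(2) E(4) E(3)] by simp
  ultimately show ?thesis
    using C(4) by (simp add: U_def K_def)
qed

end

definition det3 :: "(nat \<Rightarrow> nat \<Rightarrow> 'a::comm_ring_1) \<Rightarrow> 'a" where
  "det3 M = M 0 0 * (M 1 1 * M 2 2 - M 1 2 * M 2 1) - M 0 1 * (M 1 0 * M 2 2 - M 1 2 * M 2 0)
    + M 0 2 * (M 1 0 * M 2 1 - M 1 1 * M 2 0)"

lemma det3_cong: "(\<And>i j. i < 3 \<Longrightarrow> j < 3 \<Longrightarrow> M i j = M' i j) \<Longrightarrow> det3 M = det3 M'"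
  by (simp add: det3_def)

lemma det3_rank_le_2: "det3 (\<lambda>i j. a i * x j + b i * y j) = 0"
  unfolding det3_def by (simp add: algebra_simps)

lemma det3_factor_through_le_2:
  fixes C T :: "nat \<Rightarrow> nat \<Rightarrow> 'a::comm_ring_1"
  assumes "k \<le> 2" "\<And>i j. i < 3 \<Longrightarrow> j < 3 \<Longrightarrow> M i j = (\<Sum>l<k. C i l * T l j)"
  shows "det3 M = 0"
proof -
  define C' where "C' i l = (if l < k then C i l else 0)" for i l
  have "M i j = C' i 0 * T 0 j + C' i 1 * T 1 j" if "i < 3" "j < 3" for i j
    using assms that by (auto simp: C'_def numeral_2_eq_2 le_Suc_eq)
  then have "det3 M = det3 (\<lambda>i j. C' i 0 * T 0 j + C' i 1 * T 1 j)"
    by (rule det3_cong)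
  then show ?thesis
    by (simp only: det3_rank_le_2)
qed

definition mon :: "nat \<Rightarrow> nat \<Rightarrow> nat \<Rightarrow> mpoly3" where
  "mon i j k = Poly_Mapping.single (i, j, k) 1"

lemma mon_mult: "mon a b c * mon a' b' c' = mon (a + a') (b + b') (c + c')"
  by (simp add: mon_def mult_single)

lemma mon_0: "mon 0 0 0 = 1"
  by (simp add: mon_def flip: zero_prod_def)

lemma mon_nonzero [simp]: "mon i j k \<noteq> 0"
  by (metis lookup_single_eq lookup_zero mon_def zero_neq_one)

lemma var_eq_mon: "varX = mon 1 0 0" "varY = mon 0 1 0" "varZ = mon 0 0 1"
  by (simp_all add: varX_def varY_def varZ_def mon_def)

lemma var_power_eq_mon: "varX ^ a = mon a 0 0" "varY ^ a = mon 0 a 0" "varZ ^ a = mon 0 0 a"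
  by (induction a) (simp_all add: var_eq_mon mon_0 mon_mult)

lemma exists_add_mono3_iff:
  fixes m :: mono3
  shows "(\<exists>k. m = (i, j, l) + k) \<longleftrightarrow> i \<le> fst m \<and> j \<le> fst (snd m) \<and> l \<le> snd (snd m)"
proof
  assume "i \<le> fst m \<and> j \<le> fst (snd m) \<and> l \<le> snd (snd m)"
  then have "m = (i, j, l) + (fst m - i, fst (snd m) - j, snd (snd m) - l)"
    by (cases m) simp
  then show "\<exists>k. m = (i, j, l) + k" ..
qed auto

lemma keys_mult_mon:
  assumes "m \<in> Poly_Mapping.keys (p * mon i j l)"
  obtains a b c where "m = (a + i, b + j, c + l)" "(a, b, c) \<in> Poly_Mapping.keys p"
  using keys_single_mult[of "(i, j, l)" 1 p] assms by (force simp: mon_def mult.commute)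

lemma fermat_xyz_eq_mon:
  assumes "n \<ge> 1"
  shows "fermat_xyz (n + 2) = mon n 1 1 + mon 1 n 1 + mon 1 1 n"
proof -
  have "Suc (n - 1) = n" using assms by simp
  then show ?thesis
    unfolding fermat_xyz_def var_power_eq_mon by (simp add: var_eq_mon distrib_left mon_mult)
qed

lemma const3_add: "const3 (a + b) = const3 a + const3 b"
  by (simp add: const3_def single_add)

lemma const3_diff: "const3 (a - b) = const3 a - const3 b"
  by (simp add: const3_def single_diff)

lemma const3_mult: "const3 (a * b) = const3 a * const3 b"
  by (simp add: const3_def mult_single)

lemma const3_of_nat: "const3 (of_nat k) = of_nat k"
  by (simp add: const3_def flip: zero_prod_def)

lemma const3_numeral: "const3 (numeral k) = numeral k"
  by (simp add: const3_def flip: zero_prod_def)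

lemmas const3_simps = const3_add const3_diff const3_mult const3_of_nat const3_numeral

lemma const3_1: "const3 1 = 1"
  using const3_of_nat[of 1] by simp

lemma const3_mult_single: "const3 c * Poly_Mapping.single m e = Poly_Mapping.single m (c * e)"
  by (simp add: const3_def mult_single flip: zero_prod_def)

lemma of_nat_mult_single: "(of_nat k :: mpoly3) * Poly_Mapping.single m c = Poly_Mapping.single m (of_nat k * c)"
  by (simp flip: const3_of_nat add: const3_mult_single)

lemma lookup_const3_mult: "Poly_Mapping.lookup (const3 c * p) m = c * Poly_Mapping.lookup p m"
  by (induction p rule: poly_mapping_induct)
    (simp_all add: const3_mult_single lookup_single when_def distrib_left lookup_add)

lemma mono_deg_add: "mono_deg (u + v) = mono_deg u + mono_deg v"
  by (cases u; cases v) (simp add: mono_deg_def)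

lemma homogeneous_0 [simp]: "homogeneous k 0"
  by (simp add: homogeneous_def)

lemma homogeneous_add: "homogeneous k p \<Longrightarrow> homogeneous k q \<Longrightarrow> homogeneous k (p + q)"
  using keys_add[of p q] by (auto simp: homogeneous_def)

lemma homogeneous_uminus: "homogeneous k p \<Longrightarrow> homogeneous k (- p)"
  by (simp add: homogeneous_def)

lemma homogeneous_diff: "homogeneous k p \<Longrightarrow> homogeneous k q \<Longrightarrow> homogeneous k (p - q)"
  using homogeneous_add[of k p "- q"] homogeneous_uminus[of k q] by simp

lemma homogeneous_mult:
  assumes "homogeneous a p" "homogeneous b q"
  shows "homogeneous (a + b) (p * q)"
  unfolding homogeneous_def
proof
  fix m assume "m \<in> Poly_Mapping.keys (p * q)"
  then obtain u v where "u \<in> Poly_Mapping.keys p" "v \<in> Poly_Mapping.keys q" "m = u + v"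
    using keys_mult[of p q] by blast
  then show "mono_deg m = a + b"
    using assms by (simp add: homogeneous_def mono_deg_add)
qed

lemma homogeneous_single: "mono_deg m = k \<Longrightarrow> homogeneous k (Poly_Mapping.single m c)"
  by (simp add: homogeneous_def)

lemma homogeneous_mon: "i + j + l = k \<Longrightarrow> homogeneous k (mon i j l)"
  by (simp add: homogeneous_def mon_def mono_deg_def)

lemma homogeneous_const3_mult: "homogeneous k p \<Longrightarrow> homogeneous k (const3 c * p)"
  using homogeneous_mult[of 0 "const3 c" k p] by (simp add: const3_def homogeneous_def mono_deg_def)

lemma homogeneous_of_nat_mult: "homogeneous k p \<Longrightarrow> homogeneous k (of_nat a * p)"
  using homogeneous_const3_mult[of k p "of_nat a"] by (simp add: const3_of_nat)

lemma homogeneous_var_mult: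
  assumes "homogeneous k p"
  shows "homogeneous (k + 1) (varX * p)" "homogeneous (k + 1) (varY * p)" "homogeneous (k + 1) (varZ * p)"
  using homogeneous_mult[OF homogeneous_mon assms, of 1 0 0 1] homogeneous_mult[OF homogeneous_mon assms, of 0 1 0 1]
    homogeneous_mult[OF homogeneous_mon assms, of 0 0 1 1]
  by (simp_all add: var_eq_mon add.commute)

lemma const3_inverse_mult: "c \<noteq> 0 \<Longrightarrow> const3 (inverse c) * const3 c = 1"
  by (simp flip: const3_mult add: const3_1)

lemma homogeneous_var_mult_iff:
  "homogeneous (k + 1) (varX * p) \<longleftrightarrow> homogeneous k p"
  "homogeneous (k + 1) (varY * p) \<longleftrightarrow> homogeneous k p"
  "homogeneous (k + 1) (varZ * p) \<longleftrightarrow> homogeneous k p"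
proof -
  have "homogeneous k p" if "homogeneous (k + 1) (Poly_Mapping.single e 1 * p)" "mono_deg e = 1" for e
    unfolding homogeneous_def
  proof
    fix m assume "m \<in> Poly_Mapping.keys p"
    then have "e + m \<in> Poly_Mapping.keys (Poly_Mapping.single e 1 * p)"
      by (simp add: in_keys_iff lookup_single_mult_add)
    then have "mono_deg (e + m) = k + 1"
      using that(1) by (simp add: homogeneous_def)
    then show "mono_deg m = k"
      using that(2) by (simp add: mono_deg_add)
  qed
  then show "homogeneous (k + 1) (varX * p) \<longleftrightarrow> homogeneous k p"
    "homogeneous (k + 1) (varY * p) \<longleftrightarrow> homogeneous k p"
    "homogeneous (k + 1) (varZ * p) \<longleftrightarrow> homogeneous k p"
    using homogeneous_var_mult[of k p] by (auto simp: varX_def varY_def varZ_def mono_deg_def)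
qed

lemma restrict_keys_degree_mult:
  assumes "homogeneous e q"
  shows "restrict_keys (\<lambda>m. mono_deg m = j + e) (p * q) = restrict_keys (\<lambda>m. mono_deg m = j) p * q"
proof (induction p rule: poly_mapping_induct)
  case (single m c)
  have "mono_deg k = mono_deg m + e" if "k \<in> Poly_Mapping.keys (Poly_Mapping.single m c * q)" for k
    using keys_single_mult[of m c q] that assms by (auto simp: mono_deg_add homogeneous_def)
  then show ?case
    by (auto simp: restrict_keys_single restrict_keys_eq_zero_iff intro!: restrict_keys_id)
qed (simp_all add: distrib_right restrict_keys_add)

lemma homogeneous_restrict_keys_degree: "homogeneous j (restrict_keys (\<lambda>m. mono_deg m = j) p)"
  by (simp add: homogeneous_def keys_restrict_keys)

interpretation deriv_x: coordinate_derivation fst "\<lambda>(i, j, k). (i - 1, j, k)"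
  by unfold_locales auto

interpretation deriv_y: coordinate_derivation "\<lambda>m. fst (snd m)" "\<lambda>(i, j, k). (i, j - 1, k)"
  by unfold_locales auto

interpretation deriv_z: coordinate_derivation "\<lambda>m. snd (snd m)" "\<lambda>(i, j, k). (i, j, k - 1)"
  by unfold_locales auto

lemma pd_eq_deriv: "pdX = deriv_x.deriv" "pdY = deriv_y.deriv" "pdZ = deriv_z.deriv"
  unfolding fun_eq_iff pdX_def pdY_def pdZ_def deriv_x.deriv_def deriv_y.deriv_def deriv_z.deriv_def
  by (simp_all add: split_def)

lemma pd_add:
  "pdX (p + q) = pdX p + pdX q" "pdY (p + q) = pdY p + pdY q" "pdZ (p + q) = pdZ p + pdZ q"
  unfolding pd_eq_deriv by (rule deriv_x.deriv_add deriv_y.deriv_add deriv_z.deriv_add)+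

lemma pd_mult:
  "pdX (p * q) = pdX p * q + p * pdX q"
  "pdY (p * q) = pdY p * q + p * pdY q"
  "pdZ (p * q) = pdZ p * q + p * pdZ q"
  unfolding pd_eq_deriv by (rule deriv_x.deriv_mult deriv_y.deriv_mult deriv_z.deriv_mult)+

lemma pd_mon:
  "pdX (mon i j k) = of_nat i * mon (i - 1) j k"
  "pdY (mon i j k) = of_nat j * mon i (j - 1) k"
  "pdZ (mon i j k) = of_nat k * mon i j (k - 1)"
  unfolding pd_eq_deriv mon_def deriv_x.deriv_single deriv_y.deriv_single deriv_z.deriv_single
  by (simp_all add: of_nat_mult_single)

section \<open>Syzygies of pure powers\<close>

lemma eq_0_if_keys_separated:
  assumes "p = q" "Poly_Mapping.keys p \<subseteq> A" "Poly_Mapping.keys q \<subseteq> - A"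
  shows "p = 0"
proof -
  have "Poly_Mapping.keys p = {}" using assms by blast
  then show ?thesis by simp
qed

lemma divide_by_mon:
  obtains r q where "p = r + q * mon i j l" "Poly_Mapping.keys r \<subseteq> Poly_Mapping.keys p"
    "\<And>m. m \<in> Poly_Mapping.keys r \<Longrightarrow> \<not> (i \<le> fst m \<and> j \<le> fst (snd m) \<and> l \<le> snd (snd m))"
proof -
  define P where "P m \<longleftrightarrow> i \<le> fst m \<and> j \<le> fst (snd m) \<and> l \<le> snd (snd m)" for m :: mono3
  have "Poly_Mapping.single (i, j, l) 1 dvd restrict_keys P p"
    using exists_add_mono3_iff by (intro single_one_dvdI) (auto simp: keys_restrict_keys P_def)
  then obtain q where "restrict_keys P p = Poly_Mapping.single (i, j, l) 1 * q" ..
  then have "restrict_keys P p = q * mon i j l"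
    by (simp add: mon_def mult.commute)
  with restrict_keys_split[of P p] have "p = restrict_keys (\<lambda>m. \<not> P m) p + q * mon i j l"
    by (simp add: add.commute)
  then show ?thesis
    by (rule that) (auto simp: keys_restrict_keys P_def)
qed

lemma syzygy_two_pure_powers:
  assumes "b * mon 0 n 0 + c * mon 0 0 n = 0"
  obtains t where "b = t * mon 0 0 n" "c = - (t * mon 0 n 0)"
proof -
  obtain b0 t where b: "b = b0 + t * mon 0 0 n" and "Poly_Mapping.keys b0 \<subseteq> Poly_Mapping.keys b"
    and b0: "\<And>m. m \<in> Poly_Mapping.keys b0 \<Longrightarrow> \<not> (0 \<le> fst m \<and> 0 \<le> fst (snd m) \<and> n \<le> snd (snd m))"
    using divide_by_mon[of b 0 0 n] by blast
  have eq: "b0 * mon 0 n 0 = - ((c + t * mon 0 n 0) * mon 0 0 n)"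
    using assms unfolding b by (simp add: algebra_simps eq_neg_iff_add_eq_0)
  have "b0 * mon 0 n 0 = 0"
  proof (rule eq_0_if_keys_separated[OF eq])
    show "Poly_Mapping.keys (b0 * mon 0 n 0) \<subseteq> - {m. n \<le> snd (snd m)}"
      using b0 by (fastforce elim: keys_mult_mon)
    show "Poly_Mapping.keys (- ((c + t * mon 0 n 0) * mon 0 0 n)) \<subseteq> - (- {m. n \<le> snd (snd m)})"
      by (auto elim: keys_mult_mon)
  qed
  then have "b0 = 0" "c + t * mon 0 n 0 = 0"
    using eq by simp_all
  with b show ?thesis
    using that by (simp add: eq_neg_iff_add_eq_0)
qed

lemma syzygy_three_pure_powers:
  assumes "a * mon n 0 0 + b * mon 0 n 0 + c * mon 0 0 n = 0"
  obtains p q t where "a = p * mon 0 n 0 + q * mon 0 0 n"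
    "b = t * mon 0 0 n - p * mon n 0 0" "c = - (t * mon 0 n 0) - q * mon n 0 0"
proof -
  obtain a1 p where a1: "a = a1 + p * mon 0 n 0" and "Poly_Mapping.keys a1 \<subseteq> Poly_Mapping.keys a"
    and P: "\<And>m. m \<in> Poly_Mapping.keys a1 \<Longrightarrow> \<not> (0 \<le> fst m \<and> n \<le> fst (snd m) \<and> 0 \<le> snd (snd m))"
    using divide_by_mon[of a 0 n 0] by blast
  obtain a0 q where a0: "a1 = a0 + q * mon 0 0 n" "Poly_Mapping.keys a0 \<subseteq> Poly_Mapping.keys a1"
    and Q: "\<And>m. m \<in> Poly_Mapping.keys a0 \<Longrightarrow> \<not> (0 \<le> fst m \<and> 0 \<le> fst (snd m) \<and> n \<le> snd (snd m))"
    using divide_by_mon[of a1 0 0 n] by blast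
  define b' where "b' = b + p * mon n 0 0"
  define c' where "c' = c + q * mon n 0 0"
  have eq: "a0 * mon n 0 0 = - (b' * mon 0 n 0 + c' * mon 0 0 n)"
    using assms unfolding a1 a0(1) b'_def c'_def by (simp add: algebra_simps eq_neg_iff_add_eq_0)
  have "a0 * mon n 0 0 = 0"
  proof (rule eq_0_if_keys_separated[OF eq])
    show "Poly_Mapping.keys (a0 * mon n 0 0) \<subseteq> - {m. n \<le> fst (snd m) \<or> n \<le> snd (snd m)}"
      using P Q a0(2) by (fastforce elim: keys_mult_mon)
    have "Poly_Mapping.keys (b' * mon 0 n 0 + c' * mon 0 0 n) \<subseteq> {m. n \<le> fst (snd m) \<or> n \<le> snd (snd m)}"
    proof (intro subsetI CollectI)
      fix m assume "m \<in> Poly_Mapping.keys (b' * mon 0 n 0 + c' * mon 0 0 n)"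
      then consider "m \<in> Poly_Mapping.keys (b' * mon 0 n 0)" | "m \<in> Poly_Mapping.keys (c' * mon 0 0 n)"
        using keys_add[of "b' * mon 0 n 0" "c' * mon 0 0 n"] by blast
      then show "n \<le> fst (snd m) \<or> n \<le> snd (snd m)"
        by cases (auto elim: keys_mult_mon)
    qed
    then show "Poly_Mapping.keys (- (b' * mon 0 n 0 + c' * mon 0 0 n))
        \<subseteq> - (- {m. n \<le> fst (snd m) \<or> n \<le> snd (snd m)})"
      by (simp only: keys_minus double_compl)
  qed
  then have "a0 = 0" "b' * mon 0 n 0 + c' * mon 0 0 n = 0"
    using eq by (simp, metis neg_equal_0_iff_equal)
  then obtain t where "b' = t * mon 0 0 n" "c' = - (t * mon 0 n 0)"
    by (elim syzygy_two_pure_powers)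
  with a1 a0(1) \<open>a0 = 0\<close> show ?thesis
    using that unfolding b'_def c'_def by (simp add: algebra_simps)
qed

lemma exponents_le_if_single_dvd:
  fixes p :: mpoly3
  assumes "Poly_Mapping.single (i, j, l) c dvd p" "m \<in> Poly_Mapping.keys p"
  shows "i \<le> fst m \<and> j \<le> fst (snd m) \<and> l \<le> snd (snd m)"
  using keys_if_single_dvd[OF assms] by (simp only: exists_add_mono3_iff)

lemma restrict_keys_coordinate_zero_mult:
  fixes crd :: "mono3 \<Rightarrow> nat"
  assumes "\<And>u v. crd (u + v) = crd u + crd v"
  shows "restrict_keys (\<lambda>m. crd m = 0) (p * q)
       = restrict_keys (\<lambda>m. crd m = 0) p * restrict_keys (\<lambda>m. crd m = 0) q"
  by (rule restrict_keys_mult) (simp add: assms)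

lemma restrict_keys_coordinate_zero_single_mult:
  fixes crd :: "mono3 \<Rightarrow> nat"
  assumes "\<And>u v. crd (u + v) = crd u + crd v" "crd e \<noteq> 0"
  shows "restrict_keys (\<lambda>m. crd m = 0) (Poly_Mapping.single e c * p) = 0"
  unfolding restrict_keys_eq_zero_iff
proof
  fix m assume "m \<in> Poly_Mapping.keys (Poly_Mapping.single e c * p)"
  then obtain k where "m = e + k" using keys_single_mult by blast
  then show "crd m \<noteq> 0" using assms by simp
qed

lemma coordinate_nonzero_if_restricted_product_vanishes:
  fixes crd :: "mono3 \<Rightarrow> nat" and a q :: mpoly3
  assumes "\<And>u v. crd (u + v) = crd u + crd v"
    and "restrict_keys (\<lambda>m. crd m = 0) (a * q) = 0" "restrict_keys (\<lambda>m. crd m = 0) q \<noteq> 0"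
    and "m \<in> Poly_Mapping.keys a"
  shows "crd m \<noteq> 0"
proof -
  have "restrict_keys (\<lambda>m. crd m = 0) a = 0"
    using assms(2,3) by (simp add: restrict_keys_coordinate_zero_mult[OF assms(1)])
  then show ?thesis
    using assms(4) by (simp add: restrict_keys_eq_zero_iff)
qed

lemma var_dvdI:
  fixes p :: mpoly3
  shows "(\<And>m. m \<in> Poly_Mapping.keys p \<Longrightarrow> fst m \<noteq> 0) \<Longrightarrow> varX dvd p"
    and "(\<And>m. m \<in> Poly_Mapping.keys p \<Longrightarrow> fst (snd m) \<noteq> 0) \<Longrightarrow> varY dvd p"
    and "(\<And>m. m \<in> Poly_Mapping.keys p \<Longrightarrow> snd (snd m) \<noteq> 0) \<Longrightarrow> varZ dvd p"
  unfolding varX_def varY_def varZ_def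
  by (rule single_one_dvdI; subst exists_add_mono3_iff; simp add: Suc_le_eq)+

(* Adding the three relations gives (\<nu> + 3)(a + b + c); then each of a, b, c can be solved for. *)
lemma twisted_koszul_solution:
  fixes \<nu> k a b c p q t X Y Z :: "'a::comm_ring_1"
  assumes k: "k * (\<nu> * \<nu> * (\<nu> + 3)) = 1"
    and ha: "\<nu> * a + (a + b + c) = p * Y + q * Z"
    and hb: "\<nu> * b + (a + b + c) = t * Z - p * X"
    and hc: "\<nu> * c + (a + b + c) = - (t * Y) - q * X"
  defines "S \<equiv> X + Y + Z" and "w \<equiv> q - p - t"
  shows "a = k * (\<nu> * p - w) * (\<nu> * Y + S) + k * (\<nu> * q + w) * (\<nu> * Z + S)"
    and "b = - (k * (\<nu> * p - w) * (\<nu> * X + S)) + k * (\<nu> * t - w) * (\<nu> * Z + S)"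
    and "c = - (k * (\<nu> * q + w) * (\<nu> * X + S)) - k * (\<nu> * t - w) * (\<nu> * Y + S)"
proof -
  define T where "T = a + b + c"
  define R where "R = (p * Y + q * Z) + (t * Z - p * X) + (- (t * Y) - q * X)"
  have "(\<nu> + 3) * T = (\<nu> * a + T) + (\<nu> * b + T) + (\<nu> * c + T)"
    by (simp add: T_def algebra_simps numeral_3_eq_3)
  then have TR: "(\<nu> + 3) * T = R"
    using ha hb hc by (simp add: T_def R_def)
  have solve: "u = k * \<nu> * (\<nu> + 3) * v - k * \<nu> * R" if "\<nu> * u + T = v" for u v
  proof -
    have "u = k * (\<nu> * \<nu> * (\<nu> + 3)) * u" using k by simp
    also have "\<dots> = k * \<nu> * (\<nu> + 3) * (\<nu> * u + T) - k * \<nu> * ((\<nu> + 3) * T)"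
      by (simp add: algebra_simps)
    finally show ?thesis using that TR by simp
  qed
  show "a = k * (\<nu> * p - w) * (\<nu> * Y + S) + k * (\<nu> * q + w) * (\<nu> * Z + S)"
    using solve[OF ha[folded T_def]] by (simp add: R_def S_def w_def algebra_simps numeral_3_eq_3)
  show "b = - (k * (\<nu> * p - w) * (\<nu> * X + S)) + k * (\<nu> * t - w) * (\<nu> * Z + S)"
    using solve[OF hb[folded T_def]] by (simp add: R_def S_def w_def algebra_simps numeral_3_eq_3)
  show "c = - (k * (\<nu> * q + w) * (\<nu> * X + S)) - k * (\<nu> * t - w) * (\<nu> * Y + S)"
    using solve[OF hc[folded T_def]] by (simp add: R_def S_def w_def algebra_simps numeral_3_eq_3)
qed

lemma D0_smult3:
  assumes "v \<in> D0 f"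
  shows "smult3 s v \<in> D0 f"
proof (cases v)
  case (fields a b c)
  have "s * a * pdX f + s * b * pdY f + s * c * pdZ f = s * (a * pdX f + b * pdY f + c * pdZ f)"
    by (simp add: algebra_simps)
  then show ?thesis
    using assms by (simp add: fields D0_def smult3_def)
qed

lemma D0_add: "v \<in> D0 f \<Longrightarrow> w \<in> D0 f \<Longrightarrow> v + w \<in> D0 f"
  by (cases v; cases w) (simp add: D0_def algebra_simps)

lemma sum_lessThan_3: "(\<Sum>i<3. f i) = f 0 + f 1 + f (2 :: nat)"
  by (simp add: eval_nat_numeral)

lemma smult3_eq: "smult3 s v = (s * fst v, s * fst (snd v), s * snd (snd v))"
  by (cases v) (simp add: smult3_def)

lemma gen_module3_nth:
  assumes "j < length G"
  shows "G ! j \<in> gen_module3 G"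
proof -
  have "(\<Sum>i<length G. smult3 (if i = j then 1 else 0) (G ! i)) = (\<Sum>i<length G. if i = j then G ! i else 0)"
    by (rule sum.cong) (auto simp: smult3_eq zero_prod_def)
  also have "\<dots> = G ! j"
    using assms by simp
  finally have "G ! j = (\<Sum>i<length G. smult3 (if i = j then 1 else 0) (G ! i))" ..
  then show ?thesis
    unfolding gen_module3_def by (intro CollectI exI[of _ "\<lambda>i. if i = j then 1 else 0"]) simp
qed

lemma gen_module3_subset_D0:
  assumes "set G \<subseteq> D0 f"
  shows "gen_module3 G \<subseteq> D0 f"
proof
  fix v assume "v \<in> gen_module3 G"
  then obtain s where "v = (\<Sum>i<length G. smult3 (s i) (G ! i))"
    by (auto simp: gen_module3_def)
  moreover have "(\<Sum>i\<in>I. smult3 (s i) (G ! i)) \<in> D0 f" if "finite I" "I \<subseteq> {..<length G}" for I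
    using that
  proof (induction I rule: finite_induct)
    case empty
    then show ?case by (simp add: D0_def zero_prod_def)
  next
    case (insert i I)
    then have "G ! i \<in> D0 f" using assms by auto
    with insert show ?case by (simp add: D0_add D0_smult3)
  qed
  ultimately show "v \<in> D0 f" by blast
qed

lemma gen_module3_coefficients:
  assumes "\<And>j. j < k \<Longrightarrow> v j \<in> gen_module3 G"
  obtains s where "\<And>j. j < k \<Longrightarrow> v j = (\<Sum>l<length G. smult3 (s j l) (G ! l))"
proof -
  have "\<forall>j. \<exists>s. j < k \<longrightarrow> v j = (\<Sum>l<length G. smult3 (s l) (G ! l))"
    using assms by (auto simp: gen_module3_def)
  with choice[OF this] that show ?thesis by blast
qed

definition min_degree_ge :: "nat \<Rightarrow> mpoly3 \<Rightarrow> bool" where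
  "min_degree_ge e p \<longleftrightarrow> (\<forall>m\<in>Poly_Mapping.keys p. e \<le> mono_deg m)"

lemma min_degree_ge_add: "min_degree_ge e p \<Longrightarrow> min_degree_ge e q \<Longrightarrow> min_degree_ge e (p + q)"
  unfolding min_degree_ge_def using keys_add[of p q] by blast

lemma min_degree_ge_mult:
  assumes "min_degree_ge e q"
  shows "min_degree_ge e (p * q)"
  unfolding min_degree_ge_def
proof
  fix m assume "m \<in> Poly_Mapping.keys (p * q)"
  then obtain u v where "v \<in> Poly_Mapping.keys q" "m = u + v"
    using keys_mult[of p q] by blast
  then show "e \<le> mono_deg m"
    using assms by (auto simp: min_degree_ge_def mono_deg_add intro: trans_le_add2)
qed

lemma min_degree_ge_if_homogeneous: "homogeneous e p \<Longrightarrow> min_degree_ge e p"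
  by (simp add: min_degree_ge_def homogeneous_def)

lemma lookup_mult_lowest_degree:
  assumes "min_degree_ge e q" "mono_deg m = e"
  shows "Poly_Mapping.lookup (p * q) m = Poly_Mapping.lookup p 0 * Poly_Mapping.lookup q m"
proof -
  define p' where "p' = p - const3 (Poly_Mapping.lookup p 0)"
  have "0 \<notin> Poly_Mapping.keys p'"
    by (simp add: p'_def in_keys_iff lookup_minus const3_def flip: zero_prod_def)
  have "m \<notin> Poly_Mapping.keys (p' * q)"
  proof
    assume "m \<in> Poly_Mapping.keys (p' * q)"
    then obtain u v where "u \<in> Poly_Mapping.keys p'" "v \<in> Poly_Mapping.keys q" "m = u + v"
      using keys_mult[of p' q] by blast
    moreover have "0 < mono_deg u" if "u \<noteq> 0"
      using that by (cases u) (auto simp: mono_deg_def zero_prod_def)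
    ultimately show False
      using assms \<open>0 \<notin> Poly_Mapping.keys p'\<close> by (fastforce simp: min_degree_ge_def mono_deg_add)
  qed
  moreover have "p * q = const3 (Poly_Mapping.lookup p 0) * q + p' * q"
    by (simp add: p'_def algebra_simps)
  ultimately show ?thesis
    by (simp add: lookup_add lookup_const3_mult in_keys_iff)
qed

section \<open>The curve \<open>xyz(x\<^sup>n\<^sup>-\<^sup>1 + y\<^sup>n\<^sup>-\<^sup>1 + z\<^sup>n\<^sup>-\<^sup>1) = 0\<close>\<close>

(* n = d - 2; the argument only needs d \<ge> 4. *)
locale xyz_fermat =
  fixes n :: nat
  assumes two_le_n: "2 \<le> n"
begin

definition F :: mpoly3 where
  "F = fermat_xyz (n + 2)"

lemma F_eq: "F = mon n 1 1 + mon 1 n 1 + mon 1 1 n"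
  unfolding F_def by (rule fermat_xyz_eq_mon) (use two_le_n in simp)

lemma F_homogeneous: "homogeneous (n + 2) F"
  unfolding F_eq by (intro homogeneous_add homogeneous_mon) simp_all

lemma pd_F_eq_mon:
  "pdX F = of_nat n * mon (n - 1) 1 1 + mon 0 n 1 + mon 0 1 n"
  "pdY F = mon n 0 1 + of_nat n * mon 1 (n - 1) 1 + mon 1 0 n"
  "pdZ F = mon n 1 0 + mon 1 n 0 + of_nat n * mon 1 1 (n - 1)"
  by (simp_all add: F_eq pd_add pd_mon)

definition powX :: mpoly3 where "powX = mon (n - 1) 0 0"
definition powY :: mpoly3 where "powY = mon 0 (n - 1) 0"
definition powZ :: mpoly3 where "powZ = mon 0 0 (n - 1)"

definition cofX :: mpoly3 where "cofX = of_nat n * powX + powY + powZ"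
definition cofY :: mpoly3 where "cofY = powX + of_nat n * powY + powZ"
definition cofZ :: mpoly3 where "cofZ = powX + powY + of_nat n * powZ"

lemma pd_F: "pdX F = varY * varZ * cofX" "pdY F = varX * varZ * cofY" "pdZ F = varX * varY * cofZ"
proof -
  have "Suc (n - 1) = n" using two_le_n by simp
  then show "pdX F = varY * varZ * cofX" "pdY F = varX * varZ * cofY" "pdZ F = varX * varY * cofZ"
    by (simp_all add: pd_F_eq_mon cofX_def cofY_def cofZ_def powX_def powY_def powZ_def
        var_eq_mon mon_mult algebra_simps)
qed

lemma homogeneous_pow: "homogeneous (n - 1) powX" "homogeneous (n - 1) powY" "homogeneous (n - 1) powZ"
  by (simp_all add: powX_def powY_def powZ_def homogeneous_mon)

lemma homogeneous_cof: "homogeneous (n - 1) cofX" "homogeneous (n - 1) cofY" "homogeneous (n - 1) cofZ"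
  unfolding cofX_def cofY_def cofZ_def
  by (intro homogeneous_add homogeneous_of_nat_mult homogeneous_pow)+

lemma var_mult_pd_F:
  "varX * pdX F = of_nat n * mon n 1 1 + mon 1 n 1 + mon 1 1 n"
  "varY * pdY F = mon n 1 1 + of_nat n * mon 1 n 1 + mon 1 1 n"
  "varZ * pdZ F = mon n 1 1 + mon 1 n 1 + of_nat n * mon 1 1 n"
proof -
  have "Suc (n - 1) = n" using two_le_n by simp
  then show "varX * pdX F = of_nat n * mon n 1 1 + mon 1 n 1 + mon 1 1 n"
    "varY * pdY F = mon n 1 1 + of_nat n * mon 1 n 1 + mon 1 1 n"
    "varZ * pdZ F = mon n 1 1 + mon 1 n 1 + of_nat n * mon 1 1 n"
    by (simp_all add: pd_F_eq_mon var_eq_mon distrib_left mon_mult algebra_simps)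
qed

lemma single_in_jacobian_combination:
  "Poly_Mapping.single (n, 1, 1) (of_nat n * of_nat n + of_nat n - 2)
     = (of_nat n + 1) * (varX * pdX F) - varY * pdY F - varZ * pdZ F"
proof -
  have "(of_nat n + 1) * (varX * pdX F) - varY * pdY F - varZ * pdZ F
      = const3 (of_nat n * of_nat n + of_nat n - 2) * mon n 1 1"
    unfolding var_mult_pd_F by (simp add: const3_simps algebra_simps)
  then show ?thesis
    by (simp add: mon_def const3_mult_single)
qed

lemma F_reduced: "reduced3 F"
  unfolding reduced3_def
proof (intro conjI allI impI)
  have "Poly_Mapping.lookup F (n, 1, 1) = 1"
    using two_le_n by (simp add: F_eq mon_def lookup_add lookup_single)
  then show "F \<noteq> 0" by auto
  fix g assume "g * g dvd F"
  then obtain h where "F = g * g * h" ..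
  then have h: "F = g * (g * h)" by (simp add: mult.assoc)
  have "g dvd pdX F" "g dvd pdY F" "g dvd pdZ F"
    unfolding h pd_mult by simp_all
  then have "g dvd Poly_Mapping.single (n, 1, 1) (of_nat n * of_nat n + of_nat n - 2)"
    unfolding single_in_jacobian_combination by (intro dvd_diff dvd_mult) simp_all
  moreover have "(of_nat n * of_nat n + of_nat n - 2 :: complex) \<noteq> 0"
  proof -
    have "(of_nat n * of_nat n + of_nat n - 2 :: complex) = of_nat (n * n + n - 2)"
      using two_le_n by (simp add: of_nat_diff)
    moreover have "4 \<le> n * n" using mult_le_mono[OF two_le_n two_le_n] by simp
    then have "n * n + n - 2 \<noteq> 0" by linarith
    ultimately show ?thesis by (metis of_nat_eq_0_iff)
  qed
  ultimately obtain e c where "g = Poly_Mapping.single e c"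
    using dvd_single_imp_single by blast
  moreover obtain i j l where "e = (i, j, l)" by (cases e)
  ultimately have g: "g = Poly_Mapping.single (i, j, l) c" by simp
  have dvd: "Poly_Mapping.single (i + i, j + j, l + l) (c * c) dvd F"
    using \<open>g * g dvd F\<close> by (simp add: g mult_single)
  have "(n, 1, 1) \<in> Poly_Mapping.keys F" "(1, n, 1) \<in> Poly_Mapping.keys F"
    using two_le_n by (simp_all add: F_eq mon_def lookup_add lookup_single in_keys_iff)
  from this[THEN exponents_le_if_single_dvd[OF dvd]] have "i = 0" "j = 0" "l = 0"
    by simp_all
  then show "Poly_Mapping.keys g \<subseteq> {(0, 0, 0)}"
    by (simp add: g)
qed

end

context xyz_fermat
begin

subsection \<open>The module of Jacobian syzygies\<close>

lemma restrict_keys_pd_F_nonzero: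
  "restrict_keys (\<lambda>m. fst m = 0) (pdX F) \<noteq> 0"
  "restrict_keys (\<lambda>m. fst (snd m) = 0) (pdY F) \<noteq> 0"
  "restrict_keys (\<lambda>m. snd (snd m) = 0) (pdZ F) \<noteq> 0"
proof -
  have "Poly_Mapping.lookup (restrict_keys (\<lambda>m. fst m = 0) (pdX F)) (0, n, 1) = 1"
    "Poly_Mapping.lookup (restrict_keys (\<lambda>m. fst (snd m) = 0) (pdY F)) (n, 0, 1) = 1"
    "Poly_Mapping.lookup (restrict_keys (\<lambda>m. snd (snd m) = 0) (pdZ F)) (n, 1, 0) = 1"
    using two_le_n
    by (simp_all add: lookup_restrict_keys pd_F_eq_mon mon_def lookup_add of_nat_mult_single lookup_single)
  then show "restrict_keys (\<lambda>m. fst m = 0) (pdX F) \<noteq> 0"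
    "restrict_keys (\<lambda>m. fst (snd m) = 0) (pdY F) \<noteq> 0"
    "restrict_keys (\<lambda>m. snd (snd m) = 0) (pdZ F) \<noteq> 0"
    by (auto simp del: lookup_restrict_keys)
qed

lemma restrict_keys_var_mult:
  "restrict_keys (\<lambda>m. fst m = 0) (varX * p) = 0"
  "restrict_keys (\<lambda>m. fst (snd m) = 0) (varY * p) = 0"
  "restrict_keys (\<lambda>m. snd (snd m) = 0) (varZ * p) = 0"
  unfolding varX_def varY_def varZ_def
  by (rule restrict_keys_coordinate_zero_single_mult; simp)+

lemma restrict_keys_mult_pd_F_vanish:
  "restrict_keys (\<lambda>m. fst m = 0) (p * pdY F) = 0" "restrict_keys (\<lambda>m. fst m = 0) (p * pdZ F) = 0"
  "restrict_keys (\<lambda>m. fst (snd m) = 0) (p * pdX F) = 0" "restrict_keys (\<lambda>m. fst (snd m) = 0) (p * pdZ F) = 0"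
  "restrict_keys (\<lambda>m. snd (snd m) = 0) (p * pdX F) = 0" "restrict_keys (\<lambda>m. snd (snd m) = 0) (p * pdY F) = 0"
  using restrict_keys_var_mult(1)[of "p * varZ * cofY"] restrict_keys_var_mult(1)[of "p * varY * cofZ"]
    restrict_keys_var_mult(2)[of "p * varZ * cofX"] restrict_keys_var_mult(2)[of "p * varX * cofZ"]
    restrict_keys_var_mult(3)[of "p * varY * cofX"] restrict_keys_var_mult(3)[of "p * varX * cofY"]
  by (simp_all add: pd_F ac_simps)

lemma D0_components_divisible:
  assumes "(a, b, c) \<in> D0 F"
  shows "varX dvd a" "varY dvd b" "varZ dvd c"
proof -
  have eq: "a * pdX F + b * pdY F + c * pdZ F = 0"
    using assms by (simp add: D0_def)
  have "restrict_keys (\<lambda>m. fst m = 0) (a * pdX F) = 0"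
    using arg_cong[OF eq, of "restrict_keys (\<lambda>m. fst m = 0)"]
    by (simp only: restrict_keys_add restrict_keys_mult_pd_F_vanish restrict_keys_zero add_0_right)
  from coordinate_nonzero_if_restricted_product_vanishes[OF _ this restrict_keys_pd_F_nonzero(1)]
  have "fst m \<noteq> 0" if "m \<in> Poly_Mapping.keys a" for m
    using that by simp
  then show "varX dvd a" by (rule var_dvdI)
  have "restrict_keys (\<lambda>m. fst (snd m) = 0) (b * pdY F) = 0"
    using arg_cong[OF eq, of "restrict_keys (\<lambda>m. fst (snd m) = 0)"]
    by (simp only: restrict_keys_add restrict_keys_mult_pd_F_vanish restrict_keys_zero add_0_right add_0_left)
  from coordinate_nonzero_if_restricted_product_vanishes[OF _ this restrict_keys_pd_F_nonzero(2)]
  have "fst (snd m) \<noteq> 0" if "m \<in> Poly_Mapping.keys b" for m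
    using that by simp
  then show "varY dvd b" by (rule var_dvdI)
  have "restrict_keys (\<lambda>m. snd (snd m) = 0) (c * pdZ F) = 0"
    using arg_cong[OF eq, of "restrict_keys (\<lambda>m. snd (snd m) = 0)"]
    by (simp only: restrict_keys_add restrict_keys_mult_pd_F_vanish restrict_keys_zero add_0_left)
  from coordinate_nonzero_if_restricted_product_vanishes[OF _ this restrict_keys_pd_F_nonzero(3)]
  have "snd (snd m) \<noteq> 0" if "m \<in> Poly_Mapping.keys c" for m
    using that by simp
  then show "varZ dvd c" by (rule var_dvdI)
qed

lemma D0_iff_cofactor_syzygy:
  "(varX * a, varY * b, varZ * c) \<in> D0 F \<longleftrightarrow> a * cofX + b * cofY + c * cofZ = 0"
proof -
  have "varX * a * pdX F + varY * b * pdY F + varZ * c * pdZ F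
      = (varX * varY * varZ) * (a * cofX + b * cofY + c * cofZ)"
    by (simp add: pd_F algebra_simps)
  moreover have "varX * varY * varZ \<noteq> 0"
    by (simp add: var_eq_mon mon_mult)
  ultimately show ?thesis
    by (simp add: D0_def)
qed

lemma D0_elim:
  assumes "v \<in> D0 F"
  obtains a b c where "v = (varX * a, varY * b, varZ * c)" "a * cofX + b * cofY + c * cofZ = 0"
proof -
  obtain a b c where v: "v = (a, b, c)" by (cases v)
  with assms have "varX dvd a" "varY dvd b" "varZ dvd c"
    by (simp_all add: D0_components_divisible)
  then obtain a' b' c' where "a = varX * a'" "b = varY * b'" "c = varZ * c'"
    by (elim dvdE)
  with v assms show ?thesis
    using that D0_iff_cofactor_syzygy by blast
qed

end

context xyz_fermat
begin

definition syz1 :: "mpoly3 \<times> mpoly3 \<times> mpoly3" where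
  "syz1 = (varX * cofY, - (varY * cofX), 0)"
definition syz2 :: "mpoly3 \<times> mpoly3 \<times> mpoly3" where
  "syz2 = (varX * cofZ, 0, - (varZ * cofX))"
definition syz3 :: "mpoly3 \<times> mpoly3 \<times> mpoly3" where
  "syz3 = (0, varY * cofZ, - (varZ * cofY))"

lemma syz_in_D0: "syz1 \<in> D0 F" "syz2 \<in> D0 F" "syz3 \<in> D0 F"
  by (simp_all add: D0_def syz1_def syz2_def syz3_def pd_F algebra_simps)

lemma n_minus_1_nonzero: "(of_nat n - 1 :: complex) \<noteq> 0" "(of_nat n - 1 + 3 :: complex) \<noteq> 0"
proof -
  have "(of_nat n - 1 :: complex) = of_nat (n - 1)" "(of_nat n - 1 + 3 :: complex) = of_nat (n + 2)"
    using two_le_n by (simp_all add: of_nat_diff)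
  moreover have "n - 1 \<noteq> 0" "n + 2 \<noteq> 0"
    using two_le_n by simp_all
  ultimately show "(of_nat n - 1 :: complex) \<noteq> 0" "(of_nat n - 1 + 3 :: complex) \<noteq> 0"
    by (metis of_nat_eq_0_iff)+
qed

definition nu :: mpoly3 where
  "nu = of_nat n - 1"

lemma cof_eq_twisted:
  "cofX = nu * powX + (powX + powY + powZ)"
  "cofY = nu * powY + (powX + powY + powZ)"
  "cofZ = nu * powZ + (powX + powY + powZ)"
  by (simp_all add: nu_def cofX_def cofY_def cofZ_def algebra_simps)

definition pure_power_map :: "mpoly3 \<times> mpoly3 \<times> mpoly3 \<Rightarrow> mpoly3" where
  "pure_power_map v = fst v * powX + fst (snd v) * powY + snd (snd v) * powZ"

definition twist :: "mpoly3 \<times> mpoly3 \<times> mpoly3 \<Rightarrow> mpoly3 \<times> mpoly3 \<times> mpoly3" where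
  "twist v = (case v of (a, b, c) \<Rightarrow> (nu * a + (a + b + c), nu * b + (a + b + c), nu * c + (a + b + c)))"

lemma pure_power_map_twist: "pure_power_map (twist (a, b, c)) = a * cofX + b * cofY + c * cofZ"
  by (simp add: pure_power_map_def twist_def cof_eq_twisted algebra_simps)

lemma D0_elim_syzygies:
  assumes "v \<in> D0 F"
  obtains s1 s2 s3 where "v = smult3 s1 syz1 + smult3 s2 syz2 + smult3 s3 syz3"
proof -
  obtain a b c where v: "v = (varX * a, varY * b, varZ * c)"
    and "a * cofX + b * cofY + c * cofZ = 0"
    using assms by (rule D0_elim)
  then have "pure_power_map (twist (a, b, c)) = 0"
    by (simp add: pure_power_map_twist)
  then obtain p q t where pqt: "nu * a + (a + b + c) = p * powY + q * powZ"
    "nu * b + (a + b + c) = t * powZ - p * powX" "nu * c + (a + b + c) = - (t * powY) - q * powX"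
    unfolding powX_def powY_def powZ_def pure_power_map_def twist_def
    by (auto elim: syzygy_three_pure_powers)
  define den :: complex where "den = (of_nat n - 1) * (of_nat n - 1) * (of_nat n - 1 + 3)"
  define k where "k = const3 (inverse den)"
  have "nu * nu * (nu + 3) = const3 den"
    by (simp add: nu_def den_def const3_simps const3_1)
  moreover have "den \<noteq> 0"
    using n_minus_1_nonzero by (simp add: den_def)
  ultimately have k: "k * (nu * nu * (nu + 3)) = 1"
    by (simp add: k_def const3_inverse_mult)
  define s1 where "s1 = k * (nu * p - (q - p - t))"
  define s2 where "s2 = k * (nu * q + (q - p - t))"
  define s3 where "s3 = k * (nu * t - (q - p - t))"
  from twisted_koszul_solution[OF k pqt, folded cof_eq_twisted]
  have abc: "a = s1 * cofY + s2 * cofZ" "b = - (s1 * cofX) + s3 * cofZ" "c = - (s2 * cofX) - s3 * cofY"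
    unfolding s1_def s2_def s3_def by simp_all
  have "v = smult3 s1 syz1 + smult3 s2 syz2 + smult3 s3 syz3"
    unfolding v abc by (simp add: syz1_def syz2_def syz3_def smult3_def algebra_simps)
  then show ?thesis by (rule that)
qed

lemma gen_module3_syzygies: "gen_module3 [syz1, syz2, syz3] = D0 F"
proof
  show "gen_module3 [syz1, syz2, syz3] \<subseteq> D0 F"
    using syz_in_D0 by (intro gen_module3_subset_D0) simp
  show "D0 F \<subseteq> gen_module3 [syz1, syz2, syz3]"
  proof
    fix v assume "v \<in> D0 F"
    then obtain s1 s2 s3 where v: "v = smult3 s1 syz1 + smult3 s2 syz2 + smult3 s3 syz3"
      by (rule D0_elim_syzygies)
    define s where "s i = (if i = 0 then s1 else if i = 1 then s2 else s3)" for i :: nat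
    have "v = (\<Sum>i<length [syz1, syz2, syz3]. smult3 (s i) ([syz1, syz2, syz3] ! i))"
      by (simp add: v s_def sum_lessThan_3)
    then show "v \<in> gen_module3 [syz1, syz2, syz3]"
      unfolding gen_module3_def by blast
  qed
qed

end

context xyz_fermat
begin

subsection \<open>Minimality of the generators\<close>

lemma homogeneous_syz: "homogeneous3 n syz1" "homogeneous3 n syz2" "homogeneous3 n syz3"
proof -
  have "n - 1 + 1 = n" using two_le_n by simp
  then show "homogeneous3 n syz1" "homogeneous3 n syz2" "homogeneous3 n syz3"
    using homogeneous_var_mult[OF homogeneous_cof(1)] homogeneous_var_mult[OF homogeneous_cof(2)]
      homogeneous_var_mult[OF homogeneous_cof(3)]
    by (simp_all add: homogeneous3_def syz1_def syz2_def syz3_def homogeneous_uminus)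
qed

lemma D0_min_degree:
  assumes "v \<in> D0 F"
  shows "min_degree_ge n (fst v)" "min_degree_ge n (fst (snd v))" "min_degree_ge n (snd (snd v))"
proof -
  obtain s1 s2 s3 where v: "v = smult3 s1 syz1 + smult3 s2 syz2 + smult3 s3 syz3"
    using assms by (rule D0_elim_syzygies)
  have "min_degree_ge n (fst s)" "min_degree_ge n (fst (snd s))" "min_degree_ge n (snd (snd s))"
    if "homogeneous3 n s" for s
    using that by (auto simp: homogeneous3_def intro: min_degree_ge_if_homogeneous split: prod.splits)
  with homogeneous_syz show "min_degree_ge n (fst v)" "min_degree_ge n (fst (snd v))"
    "min_degree_ge n (snd (snd v))"
    unfolding v by (simp_all add: smult3_eq min_degree_ge_add min_degree_ge_mult)
qed

definition syz_coeff :: "nat \<Rightarrow> mpoly3 \<times> mpoly3 \<times> mpoly3 \<Rightarrow> complex" where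
  "syz_coeff i v =
    (if i = 0 then Poly_Mapping.lookup (fst v) (1, n - 1, 0)
     else if i = 1 then Poly_Mapping.lookup (fst v) (1, 0, n - 1)
     else Poly_Mapping.lookup (snd (snd v)) (0, n - 1, 1))"

lemma syz_coeff_combination:
  assumes "\<And>l. l < k \<Longrightarrow> w l \<in> D0 F"
  shows "syz_coeff i (\<Sum>l<k. smult3 (s l) (w l)) = (\<Sum>l<k. Poly_Mapping.lookup (s l) 0 * syz_coeff i (w l))"
proof -
  have deg: "mono_deg (1, n - 1, 0) = n" "mono_deg (1, 0, n - 1) = n" "mono_deg (0, n - 1, 1) = n"
    using two_le_n by (simp_all add: mono_deg_def)
  show ?thesis
    unfolding syz_coeff_def fst_sum snd_sum smult3_eq lookup_sum fst_conv snd_conv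
    using lookup_mult_lowest_degree[OF D0_min_degree(1)[OF assms] deg(1)]
      lookup_mult_lowest_degree[OF D0_min_degree(1)[OF assms] deg(2)]
      lookup_mult_lowest_degree[OF D0_min_degree(3)[OF assms] deg(3)]
    by (simp add: sum_distrib_left)
qed

lemma syz_coeff_syz:
  "syz_coeff 0 syz1 = of_nat n" "syz_coeff 1 syz1 = 1" "syz_coeff 2 syz1 = 0"
  "syz_coeff 0 syz2 = 1" "syz_coeff 1 syz2 = of_nat n" "syz_coeff 2 syz2 = -1"
  "syz_coeff 0 syz3 = 0" "syz_coeff 1 syz3 = 0" "syz_coeff 2 syz3 = - of_nat n"
  using two_le_n
  by (simp_all add: syz_coeff_def syz1_def syz2_def syz3_def cofX_def cofY_def cofZ_def powX_def powY_def powZ_def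
      var_eq_mon distrib_left mon_mult algebra_simps of_nat_mult_single lookup_add
      mon_def lookup_single mult_single lookup_minus when_def)

lemma det3_syz_coeff_nonzero: "det3 (\<lambda>j i. syz_coeff i ([syz1, syz2, syz3] ! j)) \<noteq> 0"
proof -
  have "det3 (\<lambda>j i. syz_coeff i ([syz1, syz2, syz3] ! j)) = of_nat n - of_nat n ^ 3"
    by (simp add: det3_def syz_coeff_syz syz_coeff_syz[unfolded One_nat_def] algebra_simps power3_eq_cube)
  moreover have "1 * n < n * n * n"
    using two_le_n by (intro mult_strict_right_mono) (auto intro: less_le_trans[OF _ mult_le_mono[OF two_le_n two_le_n]])
  then have "(of_nat n :: complex) \<noteq> of_nat (n ^ 3)"
    by (metis less_irrefl of_nat_eq_iff power3_eq_cube mult_1)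
  ultimately show ?thesis by simp
qed

lemma three_le_length_if_generates_D0:
  assumes "gen_module3 G = D0 F"
  shows "3 \<le> length G"
proof (rule ccontr)
  assume "\<not> 3 \<le> length G"
  then have short: "length G \<le> 2" by simp
  let ?S = "[syz1, syz2, syz3]"
  have "?S ! j \<in> gen_module3 G" if "j < 3" for j
    using that assms syz_in_D0 by (auto simp: nth_Cons')
  then obtain s where s: "\<And>j. j < 3 \<Longrightarrow> ?S ! j = (\<Sum>l<length G. smult3 (s j l) (G ! l))"
    using gen_module3_coefficients[of 3 "\<lambda>j. ?S ! j" G] by blast
  have G_D0: "G ! l \<in> D0 F" if "l < length G" for l
    using gen_module3_nth[OF that] assms by simp
  have "det3 (\<lambda>j i. syz_coeff i (?S ! j)) = 0"
  proof (rule det3_factor_through_le_2[OF short])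
    fix j i :: nat assume "j < 3" "i < 3"
    show "syz_coeff i (?S ! j) = (\<Sum>l<length G. Poly_Mapping.lookup (s j l) 0 * syz_coeff i (G ! l))"
      unfolding s[OF \<open>j < 3\<close>] by (rule syz_coeff_combination[OF G_D0])
  qed
  with det3_syz_coeff_nonzero show False by simp
qed

lemma curve_type_F: "curve_type F (n + 2) n 3"
  unfolding curve_type_def
proof (intro conjI allI impI exI[of _ "[syz1, syz2, syz3]"])
  show "homogeneous (n + 2) F" by (rule F_homogeneous)
  show "reduced3 F" by (rule F_reduced)
  show "length [syz1, syz2, syz3] = 3" by simp
  have "syz_coeff i 0 = 0" for i
    by (simp add: syz_coeff_def zero_prod_def)
  then have "syz1 \<noteq> 0" "syz2 \<noteq> 0" "syz3 \<noteq> 0"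
    using syz_coeff_syz(1,4,9) two_le_n by force+
  then show "\<forall>g\<in>set [syz1, syz2, syz3]. homogeneous3 n g \<and> g \<noteq> 0"
    using homogeneous_syz by simp
  show "gen_module3 [syz1, syz2, syz3] = D0 F" by (rule gen_module3_syzygies)
  show "3 \<le> length G" if "gen_module3 G = D0 F" for G
    using that by (rule three_le_length_if_generates_D0)
qed

end

lemma lookup_cscale: "Poly_Mapping.lookup (cscale c p) m = c * Poly_Mapping.lookup p m"
  by (simp add: cscale_def lookup_const3_mult)

lemma homogeneous_cscale: "homogeneous k p \<Longrightarrow> homogeneous k (cscale c p)"
  by (simp add: cscale_def homogeneous_const3_mult)

definition cscale3 :: "complex \<Rightarrow> mpoly3 \<times> mpoly3 \<times> mpoly3 \<Rightarrow> mpoly3 \<times> mpoly3 \<times> mpoly3" where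
  "cscale3 c v = smult3 (const3 c) v"

lemma cscale3_eq: "cscale3 c v = (cscale c (fst v), cscale c (fst (snd v)), cscale c (snd (snd v)))"
  by (simp add: cscale3_def cscale_def smult3_eq)

interpretation poly_vs: vector_space cscale
  by unfold_locales (simp_all add: cscale_def const3_simps const3_1 algebra_simps)

interpretation triple_vs: vector_space cscale3
  by unfold_locales (simp_all add: cscale3_eq poly_vs.scale_right_distrib poly_vs.scale_left_distrib)

interpretation triple_poly_vs: vector_space_pair cscale3 cscale ..

interpretation triple_triple_vs: vector_space_pair cscale3 cscale3 ..

definition monomials_of_degree :: "nat \<Rightarrow> mono3 set" where
  "monomials_of_degree k = {m. mono_deg m = k}"

lemma monomials_of_degree_Suc:
  "monomials_of_degree (Suc k)
     = (\<lambda>(i, j, l). (Suc i, j, l)) ` monomials_of_degree k \<union> (\<lambda>j. (0, j, Suc k - j)) ` {0..Suc k}"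
proof (intro set_eqI iffI)
  fix m :: mono3
  assume "m \<in> monomials_of_degree (Suc k)"
  moreover obtain i j l where m: "m = (i, j, l)" by (cases m)
  ultimately have d: "i + j + l = Suc k"
    by (simp add: monomials_of_degree_def mono_deg_def)
  show "m \<in> (\<lambda>(i, j, l). (Suc i, j, l)) ` monomials_of_degree k \<union> (\<lambda>j. (0, j, Suc k - j)) ` {0..Suc k}"
  proof (cases i)
    case 0
    with d m show ?thesis by auto
  next
    case (Suc i')
    with d m have "m = (\<lambda>(i, j, l). (Suc i, j, l)) (i', j, l)" "(i', j, l) \<in> monomials_of_degree k"
      by (simp_all add: monomials_of_degree_def mono_deg_def)
    then show ?thesis by blast
  qed
qed (auto simp: monomials_of_degree_def mono_deg_def)

lemma monomials_of_degree_0: "monomials_of_degree 0 = {(0, 0, 0)}"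
  by (auto simp: monomials_of_degree_def mono_deg_def)

lemma finite_monomials_of_degree: "finite (monomials_of_degree k)"
  by (induction k) (simp_all add: monomials_of_degree_0 monomials_of_degree_Suc)

lemma card_monomials_of_degree: "2 * card (monomials_of_degree k) = (k + 1) * (k + 2)"
proof (induction k)
  case (Suc k)
  have "card (monomials_of_degree (Suc k))
      = card ((\<lambda>(i, j, l). (Suc i, j, l)) ` monomials_of_degree k) + card ((\<lambda>j. (0 :: nat, j, Suc k - j)) ` {0..Suc k})"
    unfolding monomials_of_degree_Suc
    by (rule card_Un_disjoint) (auto simp: finite_monomials_of_degree)
  also have "\<dots> = card (monomials_of_degree k) + (k + 2)"
    by (subst card_image, force simp: inj_on_def)+ simp
  finally show ?case using Suc by (simp add: algebra_simps)
qed (simp add: monomials_of_degree_0)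

lemma single_one_eq_iff [simp]:
  "Poly_Mapping.single a (1 :: complex) = Poly_Mapping.single b 1 \<longleftrightarrow> a = b"
  by (metis lookup_single_eq lookup_single_not_eq zero_neq_one)

lemma single_one_nonzero [simp]: "Poly_Mapping.single a (1 :: complex) \<noteq> 0"
  by (metis lookup_single_eq lookup_zero zero_neq_one)

definition monomial_basis :: "nat \<Rightarrow> mpoly3 set" where
  "monomial_basis k = (\<lambda>m. Poly_Mapping.single m 1) ` monomials_of_degree k"

lemma finite_monomial_basis: "finite (monomial_basis k)"
  by (simp add: monomial_basis_def finite_monomials_of_degree)

lemma card_monomial_basis: "card (monomial_basis k) = card (monomials_of_degree k)"
  unfolding monomial_basis_def by (rule card_image) (simp add: inj_on_def)

lemma monomial_basis_nonzero: "b \<in> monomial_basis k \<Longrightarrow> b \<noteq> 0"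
  by (auto simp: monomial_basis_def)

lemma monomial_basis_coefficient:
  assumes "x \<in> monomial_basis k"
  obtains m where "\<And>y. y \<in> monomial_basis k \<Longrightarrow> Poly_Mapping.lookup y m = (if y = x then 1 else 0)"
proof -
  obtain m where m: "x = Poly_Mapping.single m 1"
    using assms by (auto simp: monomial_basis_def)
  have "Poly_Mapping.lookup y m = (if y = x then 1 else 0)" if "y \<in> monomial_basis k" for y
    using that by (auto simp: monomial_basis_def m lookup_single when_def)
  with that show ?thesis by blast
qed

lemma independent_monomial_basis: "poly_vs.independent (monomial_basis k)"
proof (rule poly_vs.independent_if_dual_functionals[OF finite_monomial_basis])
  fix x assume "x \<in> monomial_basis k"
  then obtain m where "\<And>y. y \<in> monomial_basis k \<Longrightarrow> Poly_Mapping.lookup y m = (if y = x then 1 else 0)"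
    using monomial_basis_coefficient by blast
  then show "\<exists>\<phi>. (\<forall>u v. \<phi> (u + v) = \<phi> u + \<phi> v) \<and> (\<forall>c u. \<phi> (cscale c u) = c * \<phi> u)
      \<and> (\<forall>y\<in>monomial_basis k. \<phi> y = (if y = x then 1 else 0))"
    by (intro exI[of _ "\<lambda>p. Poly_Mapping.lookup p m"]) (simp add: lookup_add lookup_cscale)
qed

lemma subspace_S_deg: "poly_vs.subspace (S_deg k)"
  unfolding poly_vs.subspace_def S_deg_def
  by (auto intro: homogeneous_add homogeneous_cscale)

lemma S_deg_eq_span: "S_deg k = poly_vs.span (monomial_basis k)"
proof
  show "poly_vs.span (monomial_basis k) \<subseteq> S_deg k"
    by (rule poly_vs.span_minimal[OF _ subspace_S_deg])
      (auto simp: monomial_basis_def S_deg_def monomials_of_degree_def intro: homogeneous_single)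
  show "S_deg k \<subseteq> poly_vs.span (monomial_basis k)"
  proof
    fix p assume "p \<in> S_deg k"
    then have "Poly_Mapping.single m 1 \<in> monomial_basis k" if "m \<in> Poly_Mapping.keys p" for m
      using that by (auto simp: S_deg_def homogeneous_def monomial_basis_def monomials_of_degree_def)
    then have "(\<Sum>m\<in>Poly_Mapping.keys p. cscale (Poly_Mapping.lookup p m) (Poly_Mapping.single m 1))
        \<in> poly_vs.span (monomial_basis k)"
      by (intro poly_vs.span_sum poly_vs.span_scale poly_vs.span_base)
    then show "p \<in> poly_vs.span (monomial_basis k)"
      by (simp add: cscale_def const3_mult_single poly_mapping_sum_single)
  qed
qed

lemma dim_S_deg: "poly_vs.dim (S_deg k) = card (monomials_of_degree k)"
  using poly_vs.dim_eq_card[OF _ independent_monomial_basis] card_monomial_basis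
  by (simp add: S_deg_eq_span poly_vs.span_span)

definition S3_deg :: "nat \<Rightarrow> (mpoly3 \<times> mpoly3 \<times> mpoly3) set" where
  "S3_deg k = {v. homogeneous3 k v}"

definition triple_basis :: "nat \<Rightarrow> (mpoly3 \<times> mpoly3 \<times> mpoly3) set" where
  "triple_basis k = (\<lambda>b. (b, 0, 0)) ` monomial_basis k \<union> (\<lambda>b. (0, b, 0)) ` monomial_basis k
     \<union> (\<lambda>b. (0, 0, b)) ` monomial_basis k"

lemma finite_triple_basis: "finite (triple_basis k)"
  by (simp add: triple_basis_def finite_monomial_basis)

lemma card_triple_basis: "card (triple_basis k) = 3 * card (monomials_of_degree k)"
proof -
  let ?X = "(\<lambda>b. (b, 0 :: mpoly3, 0 :: mpoly3)) ` monomial_basis k"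
  let ?Y = "(\<lambda>b. (0 :: mpoly3, b, 0 :: mpoly3)) ` monomial_basis k"
  let ?Z = "(\<lambda>b. (0 :: mpoly3, 0 :: mpoly3, b)) ` monomial_basis k"
  have card: "card ?X = card (monomial_basis k)" "card ?Y = card (monomial_basis k)"
    "card ?Z = card (monomial_basis k)"
    by (simp_all add: card_image inj_on_def)
  have "?X \<inter> ?Y = {}" "(?X \<union> ?Y) \<inter> ?Z = {}"
    using monomial_basis_nonzero by auto
  then show ?thesis
    unfolding triple_basis_def
    by (simp add: card_Un_disjoint finite_monomial_basis card card_monomial_basis)
qed

lemma independent_triple_basis: "triple_vs.independent (triple_basis k)"
proof (rule triple_vs.independent_if_dual_functionals[OF finite_triple_basis])
  fix x assume "x \<in> triple_basis k"
  then obtain b where b: "b \<in> monomial_basis k"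
    and cases: "x = (b, 0, 0) \<or> x = (0, b, 0) \<or> x = (0, 0, b)"
    by (auto simp: triple_basis_def)
  obtain m where m: "\<And>y. y \<in> monomial_basis k \<Longrightarrow> Poly_Mapping.lookup y m = (if y = b then 1 else 0)"
    using monomial_basis_coefficient[OF b] by blast
  have "b \<noteq> 0" using b by (rule monomial_basis_nonzero)
  have dual: "\<exists>\<phi>. (\<forall>u v. \<phi> (u + v) = \<phi> u + \<phi> v) \<and> (\<forall>c u. \<phi> (cscale3 c u) = c * \<phi> u)
      \<and> (\<forall>y\<in>triple_basis k. \<phi> y = (if y = x then 1 else 0))"
    if sel: "\<And>u v. sel (u + v) = sel u + sel v" "\<And>c u. sel (cscale3 c u) = cscale c (sel u)"
      and x: "\<And>y. y \<in> triple_basis k \<Longrightarrow> Poly_Mapping.lookup (sel y) m = (if y = x then 1 else 0)"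
    for sel :: "mpoly3 \<times> mpoly3 \<times> mpoly3 \<Rightarrow> mpoly3"
    using sel x by (intro exI[of _ "\<lambda>v. Poly_Mapping.lookup (sel v) m"]) (simp add: lookup_add lookup_cscale)
  from cases show "\<exists>\<phi>. (\<forall>u v. \<phi> (u + v) = \<phi> u + \<phi> v) \<and> (\<forall>c u. \<phi> (cscale3 c u) = c * \<phi> u)
      \<and> (\<forall>y\<in>triple_basis k. \<phi> y = (if y = x then 1 else 0))"
  proof (elim disjE)
    assume "x = (b, 0, 0)"
    then show ?thesis
      using \<open>b \<noteq> 0\<close> by (intro dual[of fst]) (auto simp: triple_basis_def m cscale3_eq split: if_splits)
  next
    assume "x = (0, b, 0)"
    then show ?thesis
      using \<open>b \<noteq> 0\<close> by (intro dual[of "\<lambda>v. fst (snd v)"])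
        (auto simp: triple_basis_def m cscale3_eq split: if_splits)
  next
    assume "x = (0, 0, b)"
    then show ?thesis
      using \<open>b \<noteq> 0\<close> by (intro dual[of "\<lambda>v. snd (snd v)"])
        (auto simp: triple_basis_def m cscale3_eq split: if_splits)
  qed
qed

lemma subspace_S3_deg: "triple_vs.subspace (S3_deg k)"
  unfolding triple_vs.subspace_def S3_deg_def
  by (auto simp: homogeneous3_def zero_prod_def cscale3_eq intro: homogeneous_add homogeneous_cscale)

lemma S3_deg_eq_span: "S3_deg k = triple_vs.span (triple_basis k)"
proof
  show "triple_vs.span (triple_basis k) \<subseteq> S3_deg k"
    by (rule triple_vs.span_minimal[OF _ subspace_S3_deg])
      (auto simp: triple_basis_def monomial_basis_def S3_deg_def monomials_of_degree_def homogeneous3_def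
        intro: homogeneous_single)
  have embed: "e ` S_deg k \<subseteq> triple_vs.span (triple_basis k)"
    if "Vector_Spaces.linear cscale cscale3 e" "e ` monomial_basis k \<subseteq> triple_basis k" for e
  proof -
    interpret vector_space_pair cscale cscale3 ..
    have "e ` S_deg k = triple_vs.span (e ` monomial_basis k)"
      unfolding S_deg_eq_span by (rule linear_span_image[OF that(1), symmetric])
    then show ?thesis
      using triple_vs.span_mono[OF that(2)] by simp
  qed
  have "Vector_Spaces.linear cscale cscale3 (\<lambda>p. (p, 0, 0))"
    "Vector_Spaces.linear cscale cscale3 (\<lambda>p. (0, p, 0))"
    "Vector_Spaces.linear cscale cscale3 (\<lambda>p. (0, 0, p))"
    by (unfold_locales; simp add: cscale3_eq cscale_def)+
  note lin = this
  have X: "(\<lambda>p. (p, 0, 0)) ` S_deg k \<subseteq> triple_vs.span (triple_basis k)"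
    by (rule embed[OF lin(1)]) (auto simp: triple_basis_def)
  have Y: "(\<lambda>p. (0, p, 0)) ` S_deg k \<subseteq> triple_vs.span (triple_basis k)"
    by (rule embed[OF lin(2)]) (auto simp: triple_basis_def)
  have Z: "(\<lambda>p. (0, 0, p)) ` S_deg k \<subseteq> triple_vs.span (triple_basis k)"
    by (rule embed[OF lin(3)]) (auto simp: triple_basis_def)
  show "S3_deg k \<subseteq> triple_vs.span (triple_basis k)"
  proof
    fix v assume "v \<in> S3_deg k"
    then obtain a b c where v: "v = (a, b, c)" "a \<in> S_deg k" "b \<in> S_deg k" "c \<in> S_deg k"
      by (cases v) (auto simp: S3_deg_def homogeneous3_def S_deg_def)
    with X Y Z have "(a, 0, 0) + ((0, b, 0) + (0, 0, c)) \<in> triple_vs.span (triple_basis k)"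
      by (intro triple_vs.span_add) auto
    then show "v \<in> triple_vs.span (triple_basis k)"
      by (simp add: v)
  qed
qed

lemma dim_S3_deg: "triple_vs.dim (S3_deg k) = 3 * card (monomials_of_degree k)"
  using triple_vs.dim_eq_card[OF _ independent_triple_basis] card_triple_basis
  by (simp add: S3_deg_eq_span triple_vs.span_span)

section \<open>The Hilbert function of the Jacobian algebra\<close>

lemma hilbert_arith:
  fixes C :: "nat \<Rightarrow> nat"
  assumes C: "\<And>k. 2 * C k = (k + 1) * (k + 2)" and "1 \<le> n"
    and "dJ + dK = 3 * C (i + 1)" "C (i + (n - 1)) + dK = 3 * C i"
  shows "C (i + 1 + (n + 1)) - dJ = 3 * n"
proof -
  obtain m where m: "n = m + 1" using \<open>1 \<le> n\<close> by (metis add.commute le_Suc_ex)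
  have "2 * C (i + 1 + (n + 1)) = 2 * dJ + 6 * n"
    using assms(3,4) C[of "i + 1 + (n + 1)"] C[of "i + 1"] C[of i] C[of "i + (n - 1)"]
    unfolding m by (simp add: algebra_simps)
  then show ?thesis by simp
qed

context xyz_fermat
begin

definition jacobian_map :: "mpoly3 \<times> mpoly3 \<times> mpoly3 \<Rightarrow> mpoly3" where
  "jacobian_map v = fst v * pdX F + fst (snd v) * pdY F + snd (snd v) * pdZ F"

definition untwist :: "mpoly3 \<times> mpoly3 \<times> mpoly3 \<Rightarrow> mpoly3 \<times> mpoly3 \<times> mpoly3" where
  "untwist v = (case v of (a, b, c) \<Rightarrow>
     let T = const3 (inverse (of_nat n + 2)) * (a + b + c);
         k = const3 (inverse (of_nat n - 1))
     in (k * (a - T), k * (b - T), k * (c - T)))"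

definition mult_vars :: "mpoly3 \<times> mpoly3 \<times> mpoly3 \<Rightarrow> mpoly3 \<times> mpoly3 \<times> mpoly3" where
  "mult_vars v = (varX * fst v, varY * fst (snd v), varZ * snd (snd v))"

lemma inverse_mult_nu: "const3 (inverse (of_nat n - 1)) * nu = 1" "const3 (inverse (of_nat n + 2)) * (nu + 3) = 1"
proof -
  have "nu = const3 (of_nat n - 1)" "nu + 3 = const3 (of_nat n + 2)"
    by (simp_all add: nu_def const3_simps const3_1)
  moreover have "(of_nat n + 2 :: complex) \<noteq> 0"
    using n_minus_1_nonzero(2) by (simp add: algebra_simps)
  ultimately show "const3 (inverse (of_nat n - 1)) * nu = 1" "const3 (inverse (of_nat n + 2)) * (nu + 3) = 1"
    using n_minus_1_nonzero(1) by (simp_all add: const3_inverse_mult)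
qed

lemma untwist_twist: "untwist (twist v) = v"
proof (cases v)
  case (fields a b c)
  let ?k1 = "const3 (inverse (of_nat n - 1))" and ?k2 = "const3 (inverse (of_nat n + 2))"
  have "?k2 * ((nu * a + (a + b + c)) + (nu * b + (a + b + c)) + (nu * c + (a + b + c)))
      = ?k2 * (nu + 3) * (a + b + c)"
    by (simp add: algebra_simps numeral_3_eq_3)
  then have "?k2 * ((nu * a + (a + b + c)) + (nu * b + (a + b + c)) + (nu * c + (a + b + c))) = a + b + c"
    by (simp add: inverse_mult_nu)
  moreover have "?k1 * (nu * p) = p" for p
    by (simp add: mult.assoc[symmetric] inverse_mult_nu)
  ultimately show ?thesis
    by (simp add: fields twist_def untwist_def Let_def)
qed

lemma twist_untwist: "twist (untwist v) = v"
proof (cases v)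
  case (fields a b c)
  let ?k1 = "const3 (inverse (of_nat n - 1))" and ?k2 = "const3 (inverse (of_nat n + 2))"
  define T where "T = ?k2 * (a + b + c)"
  have T: "(nu + 3) * T = a + b + c"
    by (simp add: T_def mult.assoc[symmetric] inverse_mult_nu mult.commute[of "nu + 3"])
  have nu_k1: "nu * (?k1 * p) = p" for p
    by (simp add: mult.assoc[symmetric] mult.commute[of nu] inverse_mult_nu)
  have "?k1 * (a - T) + ?k1 * (b - T) + ?k1 * (c - T) = ?k1 * ((a + b + c) - 3 * T)"
    by (simp add: algebra_simps numeral_3_eq_3)
  also have "(a + b + c) - 3 * T = nu * T"
    unfolding T[symmetric] by (simp add: algebra_simps)
  also have "?k1 * (nu * T) = T"
    by (simp add: mult.assoc[symmetric] inverse_mult_nu)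
  finally have "?k1 * (a - T) + ?k1 * (b - T) + ?k1 * (c - T) = T" .
  then show ?thesis
    by (simp add: fields twist_def untwist_def Let_def T_def[symmetric] nu_k1)
qed

lemma linear_jacobian_map: "Vector_Spaces.linear cscale3 cscale jacobian_map"
  by unfold_locales (auto simp: jacobian_map_def cscale3_eq cscale_def algebra_simps)

lemma linear_pure_power_map: "Vector_Spaces.linear cscale3 cscale pure_power_map"
  by unfold_locales (auto simp: pure_power_map_def cscale3_eq cscale_def algebra_simps)

lemma linear_mult_vars_untwist: "Vector_Spaces.linear cscale3 cscale3 (mult_vars \<circ> untwist)"
  by unfold_locales (auto simp: mult_vars_def untwist_def Let_def cscale3_eq cscale_def algebra_simps split: prod.splits)

lemma homogeneous_pd_F: "homogeneous (n + 1) (pdX F)" "homogeneous (n + 1) (pdY F)" "homogeneous (n + 1) (pdZ F)"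
proof -
  have "1 + 1 + (n - 1) = n + 1" using two_le_n by simp
  then show "homogeneous (n + 1) (pdX F)" "homogeneous (n + 1) (pdY F)" "homogeneous (n + 1) (pdZ F)"
    unfolding pd_F var_eq_mon
    by (metis homogeneous_mult homogeneous_mon homogeneous_cof add_0 add.right_neutral)+
qed

lemma jacobian_map_image: "jacobian_map ` S3_deg j = jacobian_ideal F \<inter> S_deg (j + (n + 1))"
proof
  show "jacobian_map ` S3_deg j \<subseteq> jacobian_ideal F \<inter> S_deg (j + (n + 1))"
    using homogeneous_mult[OF _ homogeneous_pd_F(1)] homogeneous_mult[OF _ homogeneous_pd_F(2)]
      homogeneous_mult[OF _ homogeneous_pd_F(3)]
    by (auto simp: jacobian_map_def jacobian_ideal_def S3_deg_def S_deg_def homogeneous3_def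
        intro!: homogeneous_add split: prod.splits)
  show "jacobian_ideal F \<inter> S_deg (j + (n + 1)) \<subseteq> jacobian_map ` S3_deg j"
  proof
    fix p assume p: "p \<in> jacobian_ideal F \<inter> S_deg (j + (n + 1))"
    then obtain a b c where abc: "p = a * pdX F + b * pdY F + c * pdZ F"
      by (auto simp: jacobian_ideal_def)
    let ?r = "restrict_keys (\<lambda>m. mono_deg m = j)"
    have "p = restrict_keys (\<lambda>m. mono_deg m = j + (n + 1)) p"
      using p by (intro restrict_keys_id[symmetric]) (simp add: S_deg_def homogeneous_def)
    also have "\<dots> = jacobian_map (?r a, ?r b, ?r c)"
      unfolding abc jacobian_map_def restrict_keys_add restrict_keys_degree_mult[OF homogeneous_pd_F(1)]
          restrict_keys_degree_mult[OF homogeneous_pd_F(2)] restrict_keys_degree_mult[OF homogeneous_pd_F(3)]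
      by simp
    finally show "p \<in> jacobian_map ` S3_deg j"
      by (rule image_eqI) (simp add: S3_deg_def homogeneous3_def homogeneous_restrict_keys_degree)
  qed
qed

lemma jacobian_map_kernel: "{v \<in> S3_deg j. jacobian_map v = 0} = D0 F \<inter> S3_deg j"
  by (auto simp: jacobian_map_def D0_def)

lemma monomial_basis_subset_pure_power_map_image:
  assumes "2 * n \<le> i + 4"
  shows "monomial_basis (i + (n - 1)) \<subseteq> pure_power_map ` S3_deg i"
proof
  fix x assume "x \<in> monomial_basis (i + (n - 1))"
  then obtain a b c where x: "x = Poly_Mapping.single (a, b, c) 1" and d: "a + b + c = i + (n - 1)"
    by (auto simp: monomial_basis_def monomials_of_degree_def mono_deg_def)
  have "n - 1 \<le> a \<or> n - 1 \<le> b \<or> n - 1 \<le> c" using d assms by linarith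
  then show "x \<in> pure_power_map ` S3_deg i"
  proof (elim disjE)
    assume "n - 1 \<le> a"
    with d have "pure_power_map (Poly_Mapping.single (a - (n - 1), b, c) 1, 0, 0) = x"
      "(Poly_Mapping.single (a - (n - 1), b, c) 1, 0, 0) \<in> S3_deg i"
      by (simp_all add: pure_power_map_def powX_def x mon_def mult_single S3_deg_def homogeneous3_def
          homogeneous_single mono_deg_def)
    then show ?thesis by force
  next
    assume "n - 1 \<le> b"
    with d have "pure_power_map (0, Poly_Mapping.single (a, b - (n - 1), c) 1, 0) = x"
      "(0, Poly_Mapping.single (a, b - (n - 1), c) 1, 0) \<in> S3_deg i"
      by (simp_all add: pure_power_map_def powY_def x mon_def mult_single S3_deg_def homogeneous3_def
          homogeneous_single mono_deg_def)
    then show ?thesis by force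
  next
    assume "n - 1 \<le> c"
    with d have "pure_power_map (0, 0, Poly_Mapping.single (a, b, c - (n - 1)) 1) = x"
      "(0, 0, Poly_Mapping.single (a, b, c - (n - 1)) 1) \<in> S3_deg i"
      by (simp_all add: pure_power_map_def powZ_def x mon_def mult_single S3_deg_def homogeneous3_def
          homogeneous_single mono_deg_def)
    then show ?thesis by force
  qed
qed

lemma pure_power_map_image:
  assumes "2 * n \<le> i + 4"
  shows "pure_power_map ` S3_deg i = S_deg (i + (n - 1))"
proof
  show "pure_power_map ` S3_deg i \<subseteq> S_deg (i + (n - 1))"
    using homogeneous_mult[OF _ homogeneous_pow(1)] homogeneous_mult[OF _ homogeneous_pow(2)]
      homogeneous_mult[OF _ homogeneous_pow(3)]
    by (auto simp: pure_power_map_def S3_deg_def S_deg_def homogeneous3_def intro!: homogeneous_add)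
  have "monomial_basis (i + (n - 1)) \<subseteq> pure_power_map ` S3_deg i"
    using assms by (rule monomial_basis_subset_pure_power_map_image)
  then show "S_deg (i + (n - 1)) \<subseteq> pure_power_map ` S3_deg i"
    unfolding S_deg_eq_span
    by (rule poly_vs.span_minimal[OF _ triple_poly_vs.linear_subspace_image[OF linear_pure_power_map subspace_S3_deg]])
qed

end

lemma The_eventually_eq:
  assumes "eventually (\<lambda>k. f k = t) F" "F \<noteq> bot"
  shows "(THE t. eventually (\<lambda>k. f k = t) F) = t"
proof (rule the_equality)
  fix t' assume "eventually (\<lambda>k. f k = t') F"
  with assms(1) have "eventually (\<lambda>k. t' = t) F"
    by eventually_elim simp
  with assms(2) show "t' = t"
    by (simp add: eventually_const_iff)
qed (fact assms(1))

context xyz_fermat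
begin

lemma homogeneous_nu_mult: "homogeneous i p \<Longrightarrow> homogeneous i (nu * p)"
proof -
  have "nu = const3 (of_nat n - 1)"
    by (simp add: nu_def const3_simps const3_1)
  then show "homogeneous i p \<Longrightarrow> homogeneous i (nu * p)"
    by (simp add: homogeneous_const3_mult)
qed

lemma homogeneous3_twist: "homogeneous3 i v \<Longrightarrow> homogeneous3 i (twist v)"
  by (auto simp: homogeneous3_def twist_def intro!: homogeneous_add homogeneous_nu_mult split: prod.splits)

lemma homogeneous3_untwist: "homogeneous3 i v \<Longrightarrow> homogeneous3 i (untwist v)"
  by (auto simp: homogeneous3_def untwist_def Let_def
      intro!: homogeneous_add homogeneous_diff homogeneous_const3_mult split: prod.splits)

lemma homogeneous3_mult_vars_iff: "homogeneous3 (Suc i) (mult_vars v) \<longleftrightarrow> homogeneous3 i v"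
  by (simp add: homogeneous3_def mult_vars_def homogeneous_var_mult_iff[simplified] split: prod.splits)

lemma mult_vars_untwist_image:
  "(mult_vars \<circ> untwist) ` {v \<in> S3_deg i. pure_power_map v = 0} = D0 F \<inter> S3_deg (i + 1)"
proof
  show "(mult_vars \<circ> untwist) ` {v \<in> S3_deg i. pure_power_map v = 0} \<subseteq> D0 F \<inter> S3_deg (i + 1)"
  proof
    fix w assume "w \<in> (mult_vars \<circ> untwist) ` {v \<in> S3_deg i. pure_power_map v = 0}"
    then obtain v where v: "v \<in> S3_deg i" "pure_power_map v = 0" "w = mult_vars (untwist v)"
      by auto
    obtain a b c where u: "untwist v = (a, b, c)" by (cases "untwist v")
    then have "pure_power_map (twist (a, b, c)) = 0"
      using v(2) by (simp flip: u add: twist_untwist)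
    then have "w \<in> D0 F"
      by (simp add: v(3) u mult_vars_def pure_power_map_twist D0_iff_cofactor_syzygy)
    moreover have "w \<in> S3_deg (i + 1)"
      using v(1) by (simp add: v(3) S3_deg_def homogeneous3_mult_vars_iff homogeneous3_untwist)
    ultimately show "w \<in> D0 F \<inter> S3_deg (i + 1)" ..
  qed
  show "D0 F \<inter> S3_deg (i + 1) \<subseteq> (mult_vars \<circ> untwist) ` {v \<in> S3_deg i. pure_power_map v = 0}"
  proof
    fix w assume w: "w \<in> D0 F \<inter> S3_deg (i + 1)"
    then have "w \<in> D0 F" by simp
    then obtain a b c where "w = (varX * a, varY * b, varZ * c)" "a * cofX + b * cofY + c * cofZ = 0"
      by (rule D0_elim)
    then have abc: "w = mult_vars (a, b, c)" "a * cofX + b * cofY + c * cofZ = 0"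
      by (simp_all add: mult_vars_def)
    have "twist (a, b, c) \<in> S3_deg i"
      using w abc(1) by (simp add: S3_deg_def homogeneous3_mult_vars_iff homogeneous3_twist)
    moreover have "pure_power_map (twist (a, b, c)) = 0"
      using abc(2) by (simp add: pure_power_map_twist)
    ultimately show "w \<in> (mult_vars \<circ> untwist) ` {v \<in> S3_deg i. pure_power_map v = 0}"
      using abc(1) untwist_twist by (metis (mono_tags, lifting) comp_apply image_eqI mem_Collect_eq)
  qed
qed

lemma inj_mult_vars_untwist: "inj (mult_vars \<circ> untwist)"
proof -
  have "varX \<noteq> 0" "varY \<noteq> 0" "varZ \<noteq> 0" by (simp_all add: var_eq_mon)
  then have "inj mult_vars"
    by (auto simp: inj_def mult_vars_def)
  moreover have "inj untwist"
    by (rule inj_on_inverseI[of _ twist]) (simp add: twist_untwist)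
  ultimately show ?thesis
    by (rule inj_compose)
qed

lemma hilbert_quot_jacobian_ideal:
  assumes "2 * n \<le> j + 3"
  shows "hilbert_quot (jacobian_ideal F) (j + (n + 1)) = 3 * n"
proof -
  define i where "i = j - 1"
  have j: "j = i + 1"
    using assms two_le_n by (simp add: i_def)
  let ?J = "jacobian_ideal F \<inter> S_deg (j + (n + 1))"
  let ?K = "{v \<in> S3_deg i. pure_power_map v = 0}"
  have rank_jacobian: "poly_vs.dim ?J + triple_vs.dim (D0 F \<inter> S3_deg j) = triple_vs.dim (S3_deg j)"
    using triple_poly_vs.dim_image_add_dim_kernel[OF linear_jacobian_map finite_triple_basis[of j]]
    unfolding S3_deg_eq_span[symmetric] jacobian_map_image jacobian_map_kernel .
  have "2 * n \<le> i + 4"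
    using assms j by simp
  have rank_pure_powers: "poly_vs.dim (S_deg (i + (n - 1))) + triple_vs.dim ?K = triple_vs.dim (S3_deg i)"
    using triple_poly_vs.dim_image_add_dim_kernel[OF linear_pure_power_map finite_triple_basis[of i]]
    unfolding S3_deg_eq_span[symmetric] pure_power_map_image[OF \<open>2 * n \<le> i + 4\<close>] by simp
  have iso: "triple_vs.dim (D0 F \<inter> S3_deg j) = triple_vs.dim ?K"
    using triple_triple_vs.dim_image_eq_of_inj_on_span[OF linear_mult_vars_untwist, of ?K]
      inj_mult_vars_untwist
    unfolding mult_vars_untwist_image j by (simp add: inj_on_subset)
  have "hilbert_quot (jacobian_ideal F) (j + (n + 1)) = card (monomials_of_degree (j + (n + 1))) - poly_vs.dim ?J"
    by (simp add: hilbert_quot_def dim_S_deg)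
  also have "\<dots> = 3 * n"
  proof -
    have "1 \<le> n" using two_le_n by simp
    moreover have "poly_vs.dim ?J + triple_vs.dim ?K = 3 * card (monomials_of_degree (i + 1))"
      using rank_jacobian iso by (simp add: dim_S3_deg j)
    moreover have "card (monomials_of_degree (i + (n - 1))) + triple_vs.dim ?K = 3 * card (monomials_of_degree i)"
      using rank_pure_powers by (simp add: dim_S3_deg dim_S_deg)
    ultimately show ?thesis
      using hilbert_arith[OF card_monomials_of_degree] by (simp add: j)
  qed
  finally show ?thesis .
qed

lemma total_tjurina_F: "total_tjurina F = 3 * n"
proof -
  have "eventually (\<lambda>k. hilbert_quot (jacobian_ideal F) k = 3 * n) sequentially"
    unfolding eventually_sequentially
  proof (intro exI allI impI)
    fix k assume "2 * n + n + 1 \<le> k"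
    then have "k = (k - (n + 1)) + (n + 1)" "2 * n \<le> (k - (n + 1)) + 3" by simp_all
    then show "hilbert_quot (jacobian_ideal F) k = 3 * n"
      by (metis hilbert_quot_jacobian_ideal)
  qed
  then show ?thesis
    unfolding total_tjurina_def by (simp add: The_eventually_eq)
qed

end

theorem proposition4p2:
  fixes d :: nat
  assumes "d \<ge> 5"
  shows "curve_type (fermat_xyz d) d (d - 2) 3
       \<and> (2 * (int d - 2) - int d + 3) - 3 = int d - 4
       \<and> total_tjurina (fermat_xyz d) = 3 * (d - 2)"
proof -
  interpret xyz_fermat "d - 2"
    using assms by unfold_locales simp
  have "d - 2 + 2 = d"
    using assms by simp
  then have "F = fermat_xyz d"
    by (simp only: F_def)
  with \<open>d - 2 + 2 = d\<close> show ?thesis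
    using curve_type_F total_tjurina_F by simp
qed

end
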